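(* Let $f:(0,\infty)\to\mathbb R$ be convex with $f(1)=0$, $n\ge2$ an integer, $\rho\ge1$. Then: (a) $\mathcal P_n(\rho)$ is non-empty, convex and compact. (b) For any $Q\in\mathcal P_n$ supported on $\mathcal A_n$, $D_f(\cdot\|Q)$ and $D_f(Q\|\cdot)$ attain their maxima over $\mathcal P_n(\rho)$. (c) Let $u_f(n,\rho):=\max_{Q\in\mathcal P_n(\rho)}D_f(Q\|U_n)$ and $v_f(n,\rho):=\max_{Q\in\mathcal P_n(\rho)}D_f(U_n\|Q)$. For $\rho>1$ let $\Gamma_n(\rho):=[\frac1{1+(n-1)\rho},\frac1n]$ and for $\beta\in\Gamma_n(\rho)$ let $i_\beta:=\lfloor\frac{1-n\beta}{(\rho-1)\beta}\rfloor$ and $Q_\beta(j):=\rho\beta$ for $j\le i_\beta$, $Q_\beta(i_\beta+1):=1-(n+i_\beta(\rho-1)-1)\beta$, $Q_\beta(j):=\beta$ for $i_\beta+2\le j\le n$. Then $Q_\beta\in\mathcal P_n(\rho)$, $u_f(n,\rho)=\max_{\beta\in\Gamma_n(\rho)}D_f(Q_\beta\|U_n)$ and $v_f(n,\rho)=\max_{\beta\in\Gamma_n(\rho)}D_f(U_n\|Q_\beta)$. (d) With $g_f^{(\rho)}(x):=xf\big(\frac{\rho}{1+(\rho-1)x}\big)+(1-x)f\big(\frac1{1+(\rho-1)x}\big)$, $x\in[0,1]$, and $f^\ast(t):=tf(1/t)$: $\max_{m\in\{0,\dots,n\}}g_f^{(\rho)}(\tfrac mn)\le u_f(n,\rho)\le\max_{x\in[0,1]}g_f^{(\rho)}(x)$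 and $\max_{m\in\{0,\dots,n\}}g_{f^\ast}^{(\rho)}(\tfrac mn)\le v_f(n,\rho)\le\max_{x\in[0,1]}g_{f^\ast}^{(\rho)}(x)$. (e) $\lim_{n\to\infty}u_f(n,\rho)=\max_{x\in[0,1]}g_f^{(\rho)}(x)$ and $\lim_{n\to\infty}v_f(n,\rho)=\max_{x\in[0,1]}\Big\{\frac{\rho x}{1+(\rho-1)x}f\big(\frac{1+(\rho-1)x}{\rho}\big)+\frac{(1-x)f(1+(\rho-1)x)}{1+(\rho-1)x}\Big\}$. (f) If $g_f^{(\rho)}$ is differentiable on $(0,1)$ with derivative bounded above by $K_f(\rho)\ge0$, then $0\le\lim_{n'\to\infty}u_f(n',\rho)-u_f(n,\rho)\le K_f(\rho)/n$. (g) With $f(0):=\lim_{t\to0}f(t)\in(-\infty,+\infty]$: $\lim_{\rho\to\infty}u_f(n,\rho)=(1-\frac1n)f(0)+\frac{f(n)}n$. If moreover $f(0)<\infty$, $f$ is differentiable on $(0,n)$ and $K_n:=\sup_{t\in(0,n)}|f'(t)|<\infty$, then for all $\rho\ge1$: $0\le\lim_{\rho'\to\infty}u_f(n,\rho')-u_f(n,\rho)\le\frac{2K_n(n-1)}{n+\rho-1}$. (h) If $f$ is twice differentiable and $0\le m\le f''(t)\le M$ for all $t\in[1/\rho,\rho]$, then for all $Q\in\mathcal P_n(\rho)$: $0\le\tfrac12m(n\|Q\|_2^2-1)\le D_f(Q\|U_n)\le\tfrac12M(n\|Q\|_2^2-1)\le\frac{M(\rho-1)^2}{8\rho}$, with equalities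 in the middle two inequalities for $\chi^2$ ($M=m=2$). (i) Let $d>0$. If $f$ is twice differentiable with $f''(t)\le M_f\in(0,\infty)$ for all $t>0$, then $D_f(Q\|U_n)\le d$ for all $Q\in\mathcal P_n(\rho)$ provided $\rho\le1+\frac{4d}{M_f}+\sqrt{\frac{8d}{M_f}+\frac{16d^2}{M_f^2}}$.
   Context: $\mathcal A_n:=\{1,\dots,n\}$, $\mathcal P_n$ is the set of probability mass functions on $\mathcal A_n$, $U_n$ is the uniform one, and for $\rho\ge1$, $\mathcal P_n(\rho)$ is the set of $Q\in\mathcal P_n$ with all masses positive and $q_{\max}/q_{\min}\le\rho$ ($q_{\max},q_{\min}$ the largest and smallest masses). $D_f(P\|Q)=\sum_xQ(x)f(P(x)/Q(x))$; $\|\cdot\|_2$ Euclidean norm. *)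

theory Defs
  imports "HOL-Analysis.Analysis"
begin

definition Pn :: "nat \<Rightarrow> (nat \<Rightarrow> real) set" where
  "Pn n = {p. (\<forall>x\<in>{1..n}. 0 \<le> p x) \<and> (\<forall>x. x \<notin> {1..n} \<longrightarrow> p x = 0)
              \<and> (\<Sum>x\<in>{1..n}. p x) = 1}"

definition Unif :: "nat \<Rightarrow> nat \<Rightarrow> real" where
  "Unif n = (\<lambda>x. if x \<in> {1..n} then 1 / real n else 0)"

definition qmax :: "nat \<Rightarrow> (nat \<Rightarrow> real) \<Rightarrow> real" where
  "qmax n q = Max (q ` {1..n})"

definition qmin :: "nat \<Rightarrow> (nat \<Rightarrow> real) \<Rightarrow> real" where
  "qmin n q = Min (q ` {1..n})"

definition Pn_rho :: "nat \<Rightarrow> real \<Rightarrow> (nat \<Rightarrow> real) set" where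
  "Pn_rho n \<rho> = {q \<in> Pn n. (\<forall>x\<in>{1..n}. 0 < q x) \<and> qmax n q / qmin n q \<le> \<rho>}"

definition Df :: "nat \<Rightarrow> (real \<Rightarrow> real) \<Rightarrow> (nat \<Rightarrow> real) \<Rightarrow> (nat \<Rightarrow> real) \<Rightarrow> real" where
  "Df n f P Q = (\<Sum>x\<in>{1..n}. Q x * f (P x / Q x))"

text \<open>Convexity of a set of functions (pointwise convex combinations), i.e. what the
  library notion convex unfolds to; nat => real carries no real_vector instance.\<close>
definition convex_fset :: "(nat \<Rightarrow> real) set \<Rightarrow> bool" where
  "convex_fset S \<longleftrightarrow> (\<forall>p\<in>S. \<forall>q\<in>S. \<forall>t::real. 0 \<le> t \<and> t \<le> 1 \<longrightarrow>
       (\<lambda>x. (1 - t) * p x + t * q x) \<in> S)"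

definition sqnorm2 :: "nat \<Rightarrow> (nat \<Rightarrow> real) \<Rightarrow> real" where
  "sqnorm2 n q = (\<Sum>x\<in>{1..n}. (q x)\<^sup>2)"

definition uf :: "(real \<Rightarrow> real) \<Rightarrow> nat \<Rightarrow> real \<Rightarrow> real" where
  "uf f n \<rho> = Sup ((\<lambda>Q. Df n f Q (Unif n)) ` Pn_rho n \<rho>)"

definition vf :: "(real \<Rightarrow> real) \<Rightarrow> nat \<Rightarrow> real \<Rightarrow> real" where
  "vf f n \<rho> = Sup ((\<lambda>Q. Df n f (Unif n) Q) ` Pn_rho n \<rho>)"

definition Gamma :: "nat \<Rightarrow> real \<Rightarrow> real set" where
  "Gamma n \<rho> = {1 / (1 + (real n - 1) * \<rho>) .. 1 / real n}"

definition ibeta :: "nat \<Rightarrow> real \<Rightarrow> real \<Rightarrow> nat" where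
  "ibeta n \<rho> \<beta> = nat \<lfloor>(1 - real n * \<beta>) / ((\<rho> - 1) * \<beta>)\<rfloor>"

definition Qbeta :: "nat \<Rightarrow> real \<Rightarrow> real \<Rightarrow> nat \<Rightarrow> real" where
  "Qbeta n \<rho> \<beta> = (\<lambda>j. let i = ibeta n \<rho> \<beta> in
      if j \<in> {1..n} then
        (if j \<le> i then \<rho> * \<beta>
         else if j = i + 1 then 1 - (real n + real i * (\<rho> - 1) - 1) * \<beta>
         else \<beta>)
      else 0)"

definition gf :: "(real \<Rightarrow> real) \<Rightarrow> real \<Rightarrow> real \<Rightarrow> real" where
  "gf f \<rho> x = x * f (\<rho> / (1 + (\<rho> - 1) * x)) + (1 - x) * f (1 / (1 + (\<rho> - 1) * x))"

definition fstar :: "(real \<Rightarrow> real) \<Rightarrow> real \<Rightarrow> real" where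
  "fstar f t = t * f (1 / t)"

definition f_at_0 :: "(real \<Rightarrow> real) \<Rightarrow> ereal" where
  "f_at_0 f = Lim (at_right 0) (\<lambda>t. ereal (f t))"

definition twice_diff_pos :: "(real \<Rightarrow> real) \<Rightarrow> bool" where
  "twice_diff_pos f \<longleftrightarrow> (\<forall>t>0. f differentiable (at t) \<and> (deriv f) differentiable (at t))"

end

theory Submission
  imports Defs
begin

text \<open>
  Both divergences from the uniform distribution are averages of a convex function over the
  scaled masses: \<open>D\<^sub>f(Q\<parallel>U\<^sub>n) = (1/n) \<Sum>\<^sub>x f(n Q(x))\<close>, and \<open>D\<^sub>f(U\<^sub>n\<parallel>Q)\<close> is the same
  average for the perspective \<open>f\<^sup>*(t) = t f(1/t)\<close>, which is again convex. So everything
  reduces to \<open>u\<^sub>g(n,\<rho>)\<close> for convex \<open>g\<close>.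

  If \<open>Q \<in> P\<^sub>n(\<rho>)\<close> has smallest mass \<open>\<beta>\<close>, all masses lie in \<open>[\<beta>, \<rho> \<beta>]\<close>. Replacing \<open>g\<close> by its
  chord over the scaled interval bounds the average by \<open>g\<^sub>g\<^sup>(\<^sup>\<rho>\<^sup>)(x)\<close> for a suitable \<open>x\<close>,
  while the distributions with \<open>m\<close> masses \<open>\<rho> b\<close> and \<open>n - m\<close> masses \<open>b\<close> attain
  \<open>g\<^sub>g\<^sup>(\<^sup>\<rho>\<^sup>)(m/n)\<close>; density of the grid \<open>m/n\<close> gives the limit \<open>n \<rightarrow> \<infinity>\<close>. Moving mass
  between two masses strictly inside \<open>(\<beta>, \<rho> \<beta>)\<close> does not decrease the average, so a
  maximiser can be taken with at most one interior mass, i.e. to be \<open>Q\<^sub>\<beta>\<close>. The limit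
  \<open>\<rho> \<rightarrow> \<infinity>\<close> comes from convexity at \<open>0\<close>, the rates from the mean value theorem, and the
  quadratic bounds from Taylor expansion of \<open>f\<close> around \<open>1\<close>.
\<close>

subsection \<open>Reduction to averages of a convex function\<close>

lemma convex_on_fstar:
  fixes f :: "real \<Rightarrow> real"
  assumes f: "convex_on {0<..} f"
  shows "convex_on {0<..} (fstar f)"
proof (rule convex_onI)
  fix u x y :: real
  assume u: "0 < u" "u < 1" and x: "x \<in> {0<..}" and y: "y \<in> {0<..}"
  define t where "t = (1 - u) * x + u * y"
  have t: "t > 0" using x y u unfolding t_def by (simp add: add_pos_pos)
  define w where "w = (1 - u) * x / t"
  have w1: "1 - w = u * y / t" using t unfolding w_def t_def by (simp add: field_simps)
  have "1 / t = w * (1 / x) + (1 - w) * (1 / y)"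
    unfolding w1 unfolding w_def using x y t by (simp add: field_simps)
  moreover have "0 \<le> w" "w \<le> 1" using x y u t unfolding w_def t_def by (simp_all add: field_simps)
  ultimately have "f (1 / t) \<le> w * f (1 / x) + (1 - w) * f (1 / y)"
    using convex_onD[OF f, of "1 - w" "1 / x" "1 / y"] x y by simp
  hence "t * f (1 / t) \<le> t * (w * f (1 / x) + (1 - w) * f (1 / y))"
    using t by (simp add: mult_left_mono)
  also have "\<dots> = (1 - u) * (x * f (1 / x)) + u * (y * f (1 / y))"
    unfolding w1 unfolding w_def using x y t by (simp add: field_simps)
  finally show "fstar f ((1 - u) *\<^sub>R x + u *\<^sub>R y) \<le> (1 - u) * fstar f x + u * fstar f y"
    unfolding fstar_def t_def by simp
qed (simp add: convex_real_interval)

lemma Df_Unif_eq_mean: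
  assumes "n \<ge> 1"
  shows "Df n f Q (Unif n) = (\<Sum>x\<in>{1..n}. f (real n * Q x)) / real n"
  unfolding Df_def Unif_def using assms by (simp add: sum_divide_distrib mult.commute)

lemma Df_Unif_left_eq_fstar: "Df n f (Unif n) Q = Df n (fstar f) Q (Unif n)"
  unfolding Df_def Unif_def fstar_def by (rule sum.cong) (auto simp: field_simps)

lemma vf_eq_uf_fstar: "vf f n \<rho> = uf (fstar f) n \<rho>"
  unfolding vf_def uf_def Df_Unif_left_eq_fstar ..

subsection \<open>The set of distributions with bounded mass ratio\<close>

lemma Pn_rho_iff:
  assumes "n \<ge> 1"
  shows "q \<in> Pn_rho n r \<longleftrightarrow> q \<in> Pn n \<and> (\<forall>x\<in>{1..n}. 0 < q x)
          \<and> (\<forall>x\<in>{1..n}. \<forall>y\<in>{1..n}. q x \<le> r * q y)"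
proof -
  have ne: "q ` {1..n} \<noteq> {}" "finite (q ` {1..n})" using assms by auto
  obtain x0 where x0: "x0 \<in> {1..n}" "qmax n q = q x0"
    unfolding qmax_def using Max_in[OF ne(2,1)] by auto
  obtain y0 where y0: "y0 \<in> {1..n}" "qmin n q = q y0"
    unfolding qmin_def using Min_in[OF ne(2,1)] by auto
  have bounds: "q x \<le> qmax n q" "qmin n q \<le> q x" if "x \<in> {1..n}" for x
    unfolding qmax_def qmin_def using that ne by auto
  have "qmax n q / qmin n q \<le> r \<longleftrightarrow> (\<forall>x\<in>{1..n}. \<forall>y\<in>{1..n}. q x \<le> r * q y)"
    if "\<forall>x\<in>{1..n}. 0 < q x"
  proof -
    have "qmax n q / qmin n q \<le> r \<longleftrightarrow> qmax n q \<le> r * qmin n q"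
      using that y0 by (simp add: pos_divide_le_eq mult.commute)
    also have "\<dots> \<longleftrightarrow> (\<forall>x\<in>{1..n}. \<forall>y\<in>{1..n}. q x \<le> r * q y)"
    proof
      assume le: "qmax n q \<le> r * qmin n q"
      have "0 < r * qmin n q" using le that x0 by fastforce
      hence "0 < r" using that y0 by (auto intro: zero_less_mult_pos2)
      hence r: "0 \<le> r" by simp
      show "\<forall>x\<in>{1..n}. \<forall>y\<in>{1..n}. q x \<le> r * q y"
      proof (intro ballI)
        fix x y assume "x \<in> {1..n}" "y \<in> {1..n}"
        hence "q x \<le> r * qmin n q" "qmin n q \<le> q y" using le bounds by fastforce+
        thus "q x \<le> r * q y" using r by (meson mult_left_mono order_trans)
      qed
    qed (use x0 y0 in auto)
    finally show ?thesis .
  qed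
  thus ?thesis unfolding Pn_rho_def by auto
qed

lemma Pn_rho_intro_box:
  assumes "n \<ge> 1" "q \<in> Pn n" "b > 0" "\<forall>x\<in>{1..n}. b \<le> q x \<and> q x \<le> r * b"
  shows "q \<in> Pn_rho n r"
proof -
  have "b \<le> r * b" using assms(1,4) by force
  hence r: "0 \<le> r" using \<open>b > 0\<close> by (simp add: mult_le_cancel_right1)
  have "q x \<le> r * q y" if "x \<in> {1..n}" "y \<in> {1..n}" for x y
    using assms(4) that mult_left_mono[OF _ r, of b "q y"] by force
  thus ?thesis using Pn_rho_iff[OF assms(1)] assms by force
qed

lemma Pn_rhoD:
  assumes "q \<in> Pn_rho n r"
  shows "(\<Sum>x\<in>{1..n}. q x) = 1" "\<forall>x\<in>{1..n}. 0 < q x" "\<forall>x. x \<notin> {1..n} \<longrightarrow> q x = 0"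
  using assms unfolding Pn_rho_def Pn_def by auto

lemma Pn_rho_le_one:
  assumes "q \<in> Pn_rho n r" "x \<in> {1..n}"
  shows "q x \<le> 1"
  using member_le_sum[of x "{1..n}" q] Pn_rhoD[OF assms(1)] assms(2) by (simp add: less_imp_le)

lemma Pn_rho_qmin_bounds:
  assumes n: "n \<ge> 1" and q: "q \<in> Pn_rho n r"
  shows "0 < qmin n q" "real n * qmin n q \<le> 1" "1 \<le> real n * r * qmin n q"
    "1 \<le> qmin n q * (1 + (real n - 1) * r)"
    "\<forall>x\<in>{1..n}. qmin n q \<le> q x \<and> q x \<le> r * qmin n q"
proof -
  have ne: "q ` {1..n} \<noteq> {}" "finite (q ` {1..n})" using n by auto
  have ratio: "\<forall>x\<in>{1..n}. \<forall>y\<in>{1..n}. q x \<le> r * q y" using Pn_rho_iff[OF n] q by auto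
  note sum1 = Pn_rhoD(1)[OF q]
  obtain y0 where y0: "y0 \<in> {1..n}" "qmin n q = q y0"
    unfolding qmin_def using Min_in[OF ne(2,1)] by auto
  have ge: "\<forall>x\<in>{1..n}. qmin n q \<le> q x" unfolding qmin_def using ne by auto
  show "0 < qmin n q" using y0 Pn_rhoD(2)[OF q] by auto
  show "\<forall>x\<in>{1..n}. qmin n q \<le> q x \<and> q x \<le> r * qmin n q" using ge ratio y0 by auto
  have "(\<Sum>x\<in>{1..n}. qmin n q) \<le> (\<Sum>x\<in>{1..n}. q x)" by (rule sum_mono) (use ge in auto)
  thus "real n * qmin n q \<le> 1" using sum1 by simp
  have "(\<Sum>x\<in>{1..n}. q x) \<le> (\<Sum>x\<in>{1..n}. r * qmin n q)" by (rule sum_mono) (use ratio y0 in auto)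
  thus "1 \<le> real n * r * qmin n q" using sum1 by simp
  have "1 = q y0 + (\<Sum>x\<in>{1..n} - {y0}. q x)" using sum1 y0 by (simp add: sum.remove)
  also have "(\<Sum>x\<in>{1..n} - {y0}. q x) \<le> (\<Sum>x\<in>{1..n} - {y0}. r * qmin n q)"
    by (rule sum_mono) (use ratio y0 in auto)
  also have "\<dots> = (real n - 1) * r * qmin n q" using y0 by (simp add: of_nat_diff)
  finally show "1 \<le> qmin n q * (1 + (real n - 1) * r)" using y0 by (simp add: algebra_simps)
qed

lemma Unif_in_Pn_rho:
  assumes "n \<ge> 1" "r \<ge> 1"
  shows "Unif n \<in> Pn_rho n r"
  using assms by (intro Pn_rho_intro_box[of n _ "1 / real n"]) (auto simp: Pn_def Unif_def divide_right_mono)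

lemma convex_fset_Pn_rho:
  assumes n: "n \<ge> 1"
  shows "convex_fset (Pn_rho n r)"
  unfolding convex_fset_def
proof (intro ballI allI impI)
  fix p q and t :: real
  assume p: "p \<in> Pn_rho n r" and q: "q \<in> Pn_rho n r" and t: "0 \<le> t \<and> t \<le> 1"
  define w where "w = (\<lambda>x. (1 - t) * p x + t * q x)"
  have "(\<Sum>x\<in>{1..n}. w x) = (1 - t) * (\<Sum>x\<in>{1..n}. p x) + t * (\<Sum>x\<in>{1..n}. q x)"
    unfolding w_def by (simp add: sum.distrib sum_distrib_left)
  hence sum1: "(\<Sum>x\<in>{1..n}. w x) = 1" using Pn_rhoD(1)[OF p] Pn_rhoD(1)[OF q] by simp
  have pos: "\<forall>x\<in>{1..n}. 0 < w x"
    using t Pn_rhoD(2)[OF p] Pn_rhoD(2)[OF q] unfolding w_def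
    by (cases "t = 1") (auto intro!: add_pos_nonneg mult_nonneg_nonneg simp: less_imp_le)
  have ratio: "\<forall>x\<in>{1..n}. \<forall>y\<in>{1..n}. w x \<le> r * w y"
  proof (intro ballI)
    fix x y assume "x \<in> {1..n}" "y \<in> {1..n}"
    hence "(1 - t) * p x \<le> (1 - t) * (r * p y)" "t * q x \<le> t * (r * q y)"
      using p q Pn_rho_iff[OF n] t by (auto intro: mult_left_mono)
    thus "w x \<le> r * w y" unfolding w_def by (simp add: algebra_simps)
  qed
  have "\<forall>x. x \<notin> {1..n} \<longrightarrow> w x = 0"
    using Pn_rhoD(3)[OF p] Pn_rhoD(3)[OF q] unfolding w_def by simp
  hence "w \<in> Pn n" using sum1 pos unfolding Pn_def by (simp add: less_imp_le)
  thus "w \<in> Pn_rho n r" using Pn_rho_iff[OF n] pos ratio by blast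
qed

lemma continuous_on_coordinate: "continuous_on S (\<lambda>q::nat \<Rightarrow> real. q x)"
  by (rule continuous_on_subset[OF continuous_on_product_coordinates]) simp

text \<open>The space \<open>nat \<Rightarrow> real\<close> carries the product topology; \<open>P\<^sub>n(\<rho>)\<close> is a closed subset of
  the compact box that is \<open>[0,1]\<close> on \<open>{1..n}\<close> and \<open>{0}\<close> elsewhere.\<close>

lemma compact_Pn_rho:
  assumes n: "n \<ge> 1" and r: "r \<ge> 1"
  shows "compact (Pn_rho n r)"
proof -
  define S where "S = (\<lambda>x::nat. if x \<in> {1..n} then {0..1::real} else {0})"
  define C where "C = {q::nat \<Rightarrow> real. (\<Sum>x\<in>{1..n}. q x) = 1}
    \<inter> (\<Inter>x\<in>{1..n}. \<Inter>y\<in>{1..n}. {q. q x \<le> r * q y})"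
  have "compactin (product_topology (\<lambda>i. euclidean) UNIV) (PiE UNIV S)"
    by (simp add: compactin_PiE S_def)
  hence box: "compact (PiE UNIV S)" by (metis compactin_euclidean_iff euclidean_product_topology)
  have "closed C" unfolding C_def
    by (intro closed_Int closed_INT ballI closed_Collect_eq closed_Collect_le continuous_intros
        continuous_on_coordinate)
  moreover have "Pn_rho n r = PiE UNIV S \<inter> C"
  proof (intro set_eqI iffI)
    fix q assume q: "q \<in> Pn_rho n r"
    thus "q \<in> PiE UNIV S \<inter> C"
      using Pn_rho_iff[OF n] Pn_rho_le_one[OF q] Pn_rhoD[OF q]
      unfolding S_def C_def by (auto simp: PiE_iff less_imp_le)
  next
    fix q assume q: "q \<in> PiE UNIV S \<inter> C"
    hence nonneg: "\<forall>x\<in>{1..n}. 0 \<le> q x" and zero: "\<forall>x. x \<notin> {1..n} \<longrightarrow> q x = 0"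
      and sum1: "(\<Sum>x\<in>{1..n}. q x) = 1" and ratio: "\<forall>x\<in>{1..n}. \<forall>y\<in>{1..n}. q x \<le> r * q y"
      unfolding S_def C_def PiE_iff by (auto split: if_splits)
    have "\<exists>y0\<in>{1..n}. q y0 > 0"
    proof (rule ccontr)
      assume "\<not> (\<exists>y0\<in>{1..n}. q y0 > 0)"
      hence "(\<Sum>x\<in>{1..n}. q x) \<le> 0" by (intro sum_nonpos) (auto simp: not_less)
      thus False using sum1 by simp
    qed
    then obtain y0 where y0: "y0 \<in> {1..n}" "q y0 > 0" by blast
    have "0 < q x" if "x \<in> {1..n}" for x
    proof -
      have "0 < r * q x" using ratio that y0 by (meson less_le_trans)
      thus ?thesis using r by (simp add: zero_less_mult_iff)
    qed
    thus "q \<in> Pn_rho n r" using Pn_rho_iff[OF n] nonneg zero sum1 ratio by (auto simp: Pn_def)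
  qed
  ultimately show ?thesis using box by (simp add: compact_Int_closed)
qed

lemma continuous_on_Df_fst:
  assumes f: "continuous_on {0<..} f" and Q: "\<forall>x\<in>{1..n}. 0 < Q x"
  shows "continuous_on (Pn_rho n r) (\<lambda>P. Df n f P Q)"
proof -
  have "continuous_on (Pn_rho n r) (\<lambda>P. f (P x / Q x))" if x: "x \<in> {1..n}" for x
  proof -
    have "Q x > 0" using Q x by blast
    moreover have "\<And>P. P \<in> Pn_rho n r \<Longrightarrow> P x > 0" using Pn_rhoD(2) x by blast
    ultimately show ?thesis
      by (intro continuous_on_compose2[OF f]) (auto intro!: continuous_intros continuous_on_coordinate)
  qed
  thus ?thesis unfolding Df_def by (intro continuous_on_sum continuous_intros) auto
qed

lemma continuous_on_Df_snd:
  assumes f: "continuous_on {0<..} f" and Q: "\<forall>x\<in>{1..n}. 0 < Q x"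
  shows "continuous_on (Pn_rho n r) (\<lambda>P. Df n f Q P)"
proof -
  have "continuous_on (Pn_rho n r) (\<lambda>P. f (Q x / P x))" if x: "x \<in> {1..n}" for x
  proof -
    have Qx: "Q x > 0" using Q x by blast
    have Px: "\<And>P. P \<in> Pn_rho n r \<Longrightarrow> P x > 0" using Pn_rhoD(2) x by blast
    show ?thesis using Qx
      by (intro continuous_on_compose2[OF f])
        (auto intro!: continuous_intros continuous_on_coordinate dest: Px)
  qed
  thus ?thesis unfolding Df_def
    by (intro continuous_on_sum continuous_intros continuous_on_coordinate) auto
qed

lemma Pn_rho_attains_max:
  fixes F :: "(nat \<Rightarrow> real) \<Rightarrow> real"
  assumes "n \<ge> 1" "r \<ge> 1" "continuous_on (Pn_rho n r) F"
  shows "\<exists>P\<in>Pn_rho n r. \<forall>P'\<in>Pn_rho n r. F P' \<le> F P"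
  using continuous_attains_sup[OF compact_Pn_rho[OF assms(1,2)] _ assms(3)]
    Unif_in_Pn_rho[OF assms(1,2)] by blast

subsection \<open>The extremal functions \<open>g\<^sub>f\<^sup>(\<^sup>\<rho>\<^sup>)\<close> and \<open>u\<^sub>f\<close>\<close>

lemma continuous_on_gf:
  assumes f: "continuous_on {0<..} f" and r: "r \<ge> 1"
  shows "continuous_on {0..1} (gf f r)"
proof -
  have pos: "1 + (r - 1) * x > 0" if "x \<in> {0..1}" for x :: real
    using r that by (simp add: add_pos_nonneg)
  have "continuous_on {0..1} (\<lambda>x. f (c / (1 + (r - 1) * x)))" if "c > 0" for c
    using pos that by (intro continuous_on_compose2[OF f])
      (auto intro!: continuous_intros simp: less_imp_neq[symmetric])
  thus ?thesis unfolding gf_def[abs_def] using r by (intro continuous_intros) auto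
qed

lemma gf_attains_Sup:
  assumes "continuous_on {0<..} f" "r \<ge> 1"
  shows "\<exists>x\<in>{0..1}. gf f r x = Sup (gf f r ` {0..1})"
proof -
  obtain x where x: "x \<in> {0..1}" "\<forall>y\<in>{0..1}. gf f r y \<le> gf f r x"
    using continuous_attains_sup[OF compact_Icc _ continuous_on_gf[OF assms]] by auto
  hence "Sup (gf f r ` {0..1}) = gf f r x" by (intro cSup_eq_maximum) auto
  thus ?thesis using x by auto
qed

lemma gf_le_Sup:
  assumes "continuous_on {0<..} f" "r \<ge> 1" "x \<in> {0..1}"
  shows "gf f r x \<le> Sup (gf f r ` {0..1})"
proof -
  have "bdd_above (gf f r ` {0..1})"
    using compact_continuous_image[OF continuous_on_gf[OF assms(1,2)] compact_Icc]
    by (simp add: bounded_imp_bdd_above compact_imp_bounded)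
  thus ?thesis using assms(3) by (auto intro: cSup_upper)
qed

text \<open>Every scaled mass \<open>n Q(x)\<close> lies in \<open>[a, \<rho> a]\<close> with \<open>a = n q\<^sub>m\<^sub>i\<^sub>n\<close>; bounding \<open>f\<close> by its
  chord over this interval turns the average into \<open>g\<^sub>f\<^sup>(\<^sup>\<rho>\<^sup>)\<close> at \<open>x = (1 - a) / ((\<rho> - 1) a)\<close>.\<close>

lemma Df_Unif_le_gf:
  assumes f: "convex_on {0<..} f" and n: "n \<ge> 1" and r: "r \<ge> 1" and Q: "Q \<in> Pn_rho n r"
  shows "\<exists>x\<in>{0..1}. Df n f Q (Unif n) \<le> gf f r x"
proof -
  define a where "a = real n * qmin n Q"
  note qmin = Pn_rho_qmin_bounds[OF n Q]
  have a: "a > 0" "a \<le> 1" "1 \<le> r * a" using qmin n unfolding a_def by (auto simp: mult_ac)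
  have box: "\<forall>x\<in>{1..n}. a \<le> real n * Q x \<and> real n * Q x \<le> r * a"
    using qmin(5) n unfolding a_def by (auto simp: algebra_simps)
  have sum_n: "(\<Sum>x\<in>{1..n}. real n * Q x) = real n"
    using Pn_rhoD(1)[OF Q] by (simp add: sum_distrib_left[symmetric])
  have mean: "Df n f Q (Unif n) = (\<Sum>x\<in>{1..n}. f (real n * Q x)) / real n"
    by (rule Df_Unif_eq_mean[OF n])
  show ?thesis
  proof (cases "r = 1")
    case True
    hence "\<forall>x\<in>{1..n}. real n * Q x = a" using box by force
    moreover from this have "a = 1" using sum_n n by simp
    ultimately have "Df n f Q (Unif n) = gf f r 0" unfolding mean gf_def using n by simp
    thus ?thesis by force
  next
    case False
    hence r1: "r > 1" using r by simp
    define lam where "lam x = (real n * Q x - a) / ((r - 1) * a)" for x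
    define X where "X = (1 - a) / ((r - 1) * a)"
    have lam01: "0 \<le> lam x \<and> lam x \<le> 1" if "x \<in> {1..n}" for x
      using box that r1 a unfolding lam_def by (auto simp: field_simps)
    have chord: "real n * Q x = lam x * (r * a) + (1 - lam x) * a" for x
    proof -
      have "lam x * ((r - 1) * a) = real n * Q x - a" unfolding lam_def using r1 a by simp
      thus ?thesis by (simp add: algebra_simps)
    qed
    have sum_lam: "(\<Sum>x\<in>{1..n}. lam x) = real n * X"
      unfolding lam_def X_def sum_divide_distrib[symmetric] sum_subtractf sum_n
      using r1 a by (simp add: field_simps)
    have X: "X \<in> {0..1}" "1 + (r - 1) * X = 1 / a" unfolding X_def using a r1 by (auto simp: field_simps)
    have "(\<Sum>x\<in>{1..n}. f (real n * Q x)) \<le> (\<Sum>x\<in>{1..n}. lam x * f (r * a) + (1 - lam x) * f a)"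
    proof (rule sum_mono)
      fix x assume "x \<in> {1..n}"
      thus "f (real n * Q x) \<le> lam x * f (r * a) + (1 - lam x) * f a"
        unfolding chord using convex_onD[OF f, of "1 - lam x" "r * a" a] lam01 a r1 by simp
    qed
    also have "\<dots> = (\<Sum>x\<in>{1..n}. lam x) * f (r * a) + (real n - (\<Sum>x\<in>{1..n}. lam x)) * f a"
      by (simp add: sum.distrib sum_subtractf sum_distrib_right[symmetric] left_diff_distrib)
    also have "\<dots> = real n * (X * f (r * a) + (1 - X) * f a)"
      unfolding sum_lam by (simp add: algebra_simps)
    finally have "Df n f Q (Unif n) \<le> X * f (r * a) + (1 - X) * f a"
      unfolding mean using n by (simp add: divide_le_eq mult.commute)
    also have "\<dots> = gf f r X" unfolding gf_def X(2) using a by simp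
    finally show ?thesis using X(1) by blast
  qed
qed

lemma Df_Unif_two_level:
  assumes n: "n \<ge> 1" and r: "r \<ge> 1" and m: "m \<le> n"
  shows "\<exists>Q\<in>Pn_rho n r. Df n f Q (Unif n) = gf f r (real m / real n)"
proof -
  define D where "D = real n + real m * (r - 1)"
  have D: "D > 0" unfolding D_def using n r by (simp add: add_pos_nonneg)
  define b where "b = 1 / D"
  have b: "b > 0" unfolding b_def using D by simp
  define Q where "Q x = (if x \<in> {1..m} then r * b else if x \<in> {Suc m..n} then b else 0)" for x
  have sum_Q: "(\<Sum>x\<in>{1..n}. h (Q x)) = real m * h (r * b) + (real n - real m) * h b" for h
  proof -
    have "{1..n} = {1..m} \<union> {Suc m..n}" "{1..m} \<inter> {Suc m..n} = {}" using m by auto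
    hence "(\<Sum>x\<in>{1..n}. h (Q x)) = (\<Sum>x\<in>{1..m}. h (Q x)) + (\<Sum>x\<in>{Suc m..n}. h (Q x))"
      by (simp add: sum.union_disjoint)
    also have "\<dots> = (\<Sum>x\<in>{1..m}. h (r * b)) + (\<Sum>x\<in>{Suc m..n}. h b)"
      by (intro arg_cong2[where f = "(+)"] sum.cong) (auto simp: Q_def)
    finally show ?thesis using m by (simp add: of_nat_diff)
  qed
  have "(\<Sum>x\<in>{1..n}. Q x) = real m * (r * b) + (real n - real m) * b"
    using sum_Q[of "\<lambda>t. t"] by simp
  also have "\<dots> = b * D" unfolding D_def by (simp add: algebra_simps)
  also have "\<dots> = 1" unfolding b_def using D by simp
  finally have "(\<Sum>x\<in>{1..n}. Q x) = 1" .
  hence "Q \<in> Pn n" using b r m unfolding Pn_def by (auto simp: Q_def)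
  hence Q_in: "Q \<in> Pn_rho n r" using b r n
    by (intro Pn_rho_intro_box[of n Q b]) (auto simp: Q_def)
  have scale: "r / (1 + (r - 1) * (real m / real n)) = real n * (r * b)"
    "1 / (1 + (r - 1) * (real m / real n)) = real n * b"
    unfolding b_def using n D by (simp_all add: D_def field_simps)
  have "Df n f Q (Unif n) = gf f r (real m / real n)"
    unfolding Df_Unif_eq_mean[OF n] gf_def scale sum_Q[of "\<lambda>t. f (real n * t)"]
    using n by (simp add: field_simps)
  thus ?thesis using Q_in by blast
qed

lemma Df_Unif_le_Sup_gf:
  assumes f: "convex_on {0<..} f" and n: "n \<ge> 1" and r: "r \<ge> 1" and Q: "Q \<in> Pn_rho n r"
  shows "Df n f Q (Unif n) \<le> Sup (gf f r ` {0..1})"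
  using Df_Unif_le_gf[OF assms] gf_le_Sup[OF convex_on_continuous[OF _ f] r] by force

lemma Df_Unif_le_uf:
  assumes f: "convex_on {0<..} f" and n: "n \<ge> 1" and r: "r \<ge> 1" and Q: "Q \<in> Pn_rho n r"
  shows "Df n f Q (Unif n) \<le> uf f n r"
  unfolding uf_def using Df_Unif_le_Sup_gf[OF f n r] Q by (auto intro!: cSup_upper bdd_aboveI2)

lemma gf_grid_le_uf:
  assumes f: "convex_on {0<..} f" and n: "n \<ge> 1" and r: "r \<ge> 1" and m: "m \<le> n"
  shows "gf f r (real m / real n) \<le> uf f n r"
  using Df_Unif_two_level[OF n r m] Df_Unif_le_uf[OF f n r] by metis

lemma uf_le_Sup_gf:
  assumes f: "convex_on {0<..} f" and n: "n \<ge> 1" and r: "r \<ge> 1"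
  shows "uf f n r \<le> Sup (gf f r ` {0..1})"
  unfolding uf_def using Df_Unif_le_Sup_gf[OF f n r] Unif_in_Pn_rho[OF n r]
  by (auto intro!: cSup_least)

lemma Max_gf_grid_le_uf:
  assumes f: "convex_on {0<..} f" and n: "n \<ge> 1" and r: "r \<ge> 1"
  shows "Max ((\<lambda>m. gf f r (real m / real n)) ` {0..n}) \<le> uf f n r"
  using gf_grid_le_uf[OF f n r] by (intro Max.boundedI) auto

subsection \<open>The extremal distributions \<open>Q\<^sub>\<beta>\<close>\<close>

lemma convex_on_scale:
  fixes f :: "real \<Rightarrow> real"
  assumes f: "convex_on {0<..} f" and c: "c > 0"
  shows "convex_on {0<..} (\<lambda>t. f (c * t))"
proof (rule convex_onI)
  fix u x y :: real assume "0 < u" "u < 1" "x \<in> {0<..}" "y \<in> {0<..}"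
  thus "f (c * ((1 - u) *\<^sub>R x + u *\<^sub>R y)) \<le> (1 - u) * f (c * x) + u * f (c * y)"
    using convex_onD[OF f, of u "c * x" "c * y"] c by (simp add: algebra_simps)
qed (simp add: convex_real_interval)

lemma Qbeta_shape:
  assumes n: "n \<ge> 2" and r: "r > 1" and \<beta>: "\<beta> \<in> Gamma n r"
  defines "s \<equiv> (1 - real n * \<beta>) / ((r - 1) * \<beta>)"
  defines "i \<equiv> ibeta n r \<beta>"
  defines "c \<equiv> 1 - (real n + real i * (r - 1) - 1) * \<beta>"
  shows "\<beta> > 0" "real i \<le> s" "s < real i + 1" "i + 1 \<le> n"
    "c = \<beta> + (s - real i) * (r - 1) * \<beta>" "\<beta> \<le> c" "c \<le> r * \<beta>"
    "(\<Sum>j\<in>{1..n}. h (Qbeta n r \<beta> j)) = real i * h (r * \<beta>) + h c + (real n - real i - 1) * h \<beta>"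
proof -
  have D: "1 + (real n - 1) * r > 0" using n r by (simp add: add_pos_nonneg)
  have \<beta>_le: "1 \<le> \<beta> * (1 + (real n - 1) * r)" "real n * \<beta> \<le> 1"
    using \<beta> D n unfolding Gamma_def by (auto simp: field_simps)
  show \<beta>_pos: "\<beta> > 0" using \<beta> D unfolding Gamma_def by (auto intro: less_le_trans[rotated])
  have rb: "(r - 1) * \<beta> > 0" using r \<beta>_pos by simp
  have s0: "0 \<le> s" unfolding s_def using \<beta>_le rb by simp
  have "1 - real n * \<beta> \<le> (real n - 1) * ((r - 1) * \<beta>)" using \<beta>_le by (simp add: algebra_simps)
  hence s_le: "s \<le> real n - 1" unfolding s_def using rb by (simp add: divide_le_eq)
  have i: "i = nat \<lfloor>s\<rfloor>" unfolding i_def ibeta_def s_def ..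
  show fl: "real i \<le> s" "s < real i + 1" unfolding i using s0 by linarith+
  show i_le: "i + 1 \<le> n" using fl s_le n by linarith
  have "r \<noteq> 1" "\<beta> \<noteq> 0" using r \<beta>_pos by auto
  hence "s * ((r - 1) * \<beta>) = 1 - real n * \<beta>" unfolding s_def by simp
  thus c: "c = \<beta> + (s - real i) * (r - 1) * \<beta>" unfolding c_def by (simp add: algebra_simps)
  show "\<beta> \<le> c" unfolding c using fl rb by (simp add: mult.assoc)
  have "(s - real i) * ((r - 1) * \<beta>) \<le> 1 * ((r - 1) * \<beta>)"
    using fl rb by (intro mult_right_mono) auto
  thus "c \<le> r * \<beta>" unfolding c by (simp add: algebra_simps)
  have "{1..n} = {1..i} \<union> {Suc i} \<union> {Suc (Suc i)..n}" using i_le by auto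
  hence "(\<Sum>j\<in>{1..n}. h (Qbeta n r \<beta> j))
      = (\<Sum>j\<in>{1..i}. h (Qbeta n r \<beta> j)) + h (Qbeta n r \<beta> (Suc i))
        + (\<Sum>j\<in>{Suc (Suc i)..n}. h (Qbeta n r \<beta> j))"
    by (simp add: sum.union_disjoint)
  also have "\<dots> = (\<Sum>j\<in>{1..i}. h (r * \<beta>)) + h c + (\<Sum>j\<in>{Suc (Suc i)..n}. h \<beta>)"
    using i_le by (intro arg_cong2[where f = "(+)"] sum.cong)
      (auto simp: Qbeta_def i_def c_def Let_def)
  finally show "(\<Sum>j\<in>{1..n}. h (Qbeta n r \<beta> j)) = real i * h (r * \<beta>) + h c + (real n - real i - 1) * h \<beta>"
    using i_le by (simp add: of_nat_diff)
qed

lemma Qbeta_in_Pn_rho: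
  assumes n: "n \<ge> 2" and r: "r > 1" and \<beta>: "\<beta> \<in> Gamma n r"
  shows "Qbeta n r \<beta> \<in> Pn_rho n r"
proof -
  note shape = Qbeta_shape[OF n r \<beta>]
  have box: "\<forall>x\<in>{1..n}. \<beta> \<le> Qbeta n r \<beta> x \<and> Qbeta n r \<beta> x \<le> r * \<beta>"
    using shape(1,6,7) r by (auto simp: Qbeta_def Let_def)
  have "(\<Sum>j\<in>{1..n}. Qbeta n r \<beta> j) = 1" unfolding shape(8)[of "\<lambda>t. t"] by (simp add: algebra_simps)
  hence "Qbeta n r \<beta> \<in> Pn n" using box shape(1) unfolding Pn_def by (auto simp: Qbeta_def Let_def)
  thus ?thesis using box shape(1) n by (intro Pn_rho_intro_box) auto
qed

text \<open>A distribution squeezed between \<open>\<beta>\<close> and \<open>\<rho> \<beta>\<close> with at most one mass strictly inside is a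
  permutation of \<open>Q\<^sub>\<beta>\<close>: the masses equal to \<open>\<rho> \<beta>\<close> are counted by \<open>i\<^sub>\<beta>\<close>, and normalisation
  fixes the interior mass to be \<open>c\<close>.\<close>

lemma sum_eq_sum_Qbeta:
  fixes h :: "real \<Rightarrow> real"
  assumes n: "n \<ge> 2" and r: "r > 1" and \<beta>: "\<beta> \<in> Gamma n r"
    and box: "\<forall>x\<in>{1..n}. \<beta> \<le> Q x \<and> Q x \<le> r * \<beta>" and sum_Q: "(\<Sum>x\<in>{1..n}. Q x) = 1"
    and interior: "card {x\<in>{1..n}. \<beta> < Q x \<and> Q x < r * \<beta>} \<le> 1"
  shows "(\<Sum>x\<in>{1..n}. h (Q x)) = (\<Sum>j\<in>{1..n}. h (Qbeta n r \<beta> j))"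
proof -
  define s where "s = (1 - real n * \<beta>) / ((r - 1) * \<beta>)"
  define i where "i = ibeta n r \<beta>"
  define c where "c = 1 - (real n + real i * (r - 1) - 1) * \<beta>"
  note shape = Qbeta_shape[OF n r \<beta>, folded s_def i_def, folded c_def]
  have rb: "(r - 1) * \<beta> > 0" using r shape(1) by simp
  define T where "T = {x\<in>{1..n}. Q x = r * \<beta>}"
  define I where "I = {x\<in>{1..n}. \<beta> < Q x \<and> Q x < r * \<beta>}"
  define B where "B = {x\<in>{1..n}. Q x = \<beta>}"
  have split: "(\<Sum>x\<in>{1..n}. g (Q x)) = real (card T) * g (r * \<beta>) + (\<Sum>x\<in>I. g (Q x)) + real (card B) * g \<beta>"
    for g :: "real \<Rightarrow> real"
  proof -
    have parts: "{1..n} = T \<union> I \<union> B" "T \<inter> I = {}" "(T \<union> I) \<inter> B = {}"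
      "finite T" "finite I" "finite B"
      using box rb unfolding T_def I_def B_def by force+
    have "(\<Sum>x\<in>{1..n}. g (Q x)) = (\<Sum>x\<in>T. g (Q x)) + (\<Sum>x\<in>I. g (Q x)) + (\<Sum>x\<in>B. g (Q x))"
      unfolding parts(1) using parts(2-) by (simp add: sum.union_disjoint)
    also have "(\<Sum>x\<in>T. g (Q x)) = (\<Sum>x\<in>T. g (r * \<beta>))" by (rule sum.cong) (auto simp: T_def)
    also have "(\<Sum>x\<in>B. g (Q x)) = (\<Sum>x\<in>B. g \<beta>)" by (rule sum.cong) (auto simp: B_def)
    finally show ?thesis by simp
  qed
  have card: "real (card T) + real (card I) + real (card B) = real n" using split[of "\<lambda>_. 1"] by simp
  have mass: "real (card T) * (r * \<beta>) + (\<Sum>x\<in>I. Q x) + real (card B) * \<beta> = 1"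
    using split[of "\<lambda>t. t"] sum_Q by simp
  obtain v where v: "\<beta> \<le> v" "v < r * \<beta>" "card I = 0 \<and> v = \<beta> \<or> card I = 1"
    "\<And>g :: real \<Rightarrow> real. (\<Sum>x\<in>I. g (Q x)) = real (card I) * g v"
  proof (cases "I = {}")
    case True thus thesis using that[of \<beta>] rb by (simp add: algebra_simps)
  next
    case False
    moreover have "finite I" unfolding I_def by simp
    ultimately have "card I = 1" using interior unfolding I_def[symmetric] by (simp add: le_Suc_eq)
    then obtain z where z: "I = {z}" by (rule card_1_singletonE)
    hence "\<beta> < Q z" "Q z < r * \<beta>" unfolding I_def by blast+
    thus thesis using that[of "Q z"] z by auto
  qed
  have frac: "0 \<le> (v - \<beta>) / ((r - 1) * \<beta>)" "(v - \<beta>) / ((r - 1) * \<beta>) < 1"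
    using v(1,2) rb by (auto simp: field_simps)
  have "real (card T) * ((r - 1) * \<beta>) + (v - \<beta>)
      = real (card T) * (r * \<beta>) + real (card I) * v + real (card B) * \<beta>
        - (real (card T) + real (card I) + real (card B)) * \<beta>"
    using v(3) by (auto simp: algebra_simps)
  also have "\<dots> = 1 - real n * \<beta>" using mass card v(4)[of "\<lambda>t. t"] by simp
  finally have "real (card T) * ((r - 1) * \<beta>) + (v - \<beta>) = 1 - real n * \<beta>" .
  hence "s = (real (card T) * ((r - 1) * \<beta>) + (v - \<beta>)) / ((r - 1) * \<beta>)"
    unfolding s_def by simp
  hence s: "s = real (card T) + (v - \<beta>) / ((r - 1) * \<beta>)"
    using r shape(1) by (simp add: add_divide_distrib)
  hence "\<lfloor>s\<rfloor> = int (card T)" using frac by (intro floor_unique) auto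
  hence i: "i = card T" unfolding i_def ibeta_def s_def[symmetric] by simp
  have "c = v" unfolding shape(5) s i using r shape(1) by simp
  moreover have B: "real (card B) = real n - real (card T) - real (card I)" using card by simp
  ultimately show ?thesis
    unfolding split[of h] shape(8)[of h] v(4)[of h] i B using v(3) by (auto simp: algebra_simps)
qed

lemma mass_transfer:
  fixes Q :: "nat \<Rightarrow> real"
  assumes box: "\<forall>x\<in>{1..n}. \<beta> \<le> Q x \<and> Q x \<le> r * \<beta>" and sum_Q: "(\<Sum>x\<in>{1..n}. Q x) = 1"
    and j: "j \<in> {x\<in>{1..n}. \<beta> < Q x \<and> Q x < r * \<beta>}"
    and k: "k \<in> {x\<in>{1..n}. \<beta> < Q x \<and> Q x < r * \<beta>}" and jk: "j \<noteq> k"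
  defines "d \<equiv> min (r * \<beta> - Q j) (Q k - \<beta>)"
  assumes Q': "Q' = (\<lambda>x. Q x + (if x = j then d else if x = k then - d else 0))"
  shows "d > 0" "\<forall>x\<in>{1..n}. \<beta> \<le> Q' x \<and> Q' x \<le> r * \<beta>" "(\<Sum>x\<in>{1..n}. Q' x) = 1"
    "{x\<in>{1..n}. \<beta> < Q' x \<and> Q' x < r * \<beta>} \<subset> {x\<in>{1..n}. \<beta> < Q x \<and> Q x < r * \<beta>}"
proof -
  show "d > 0" using j k unfolding d_def by (auto simp: min_def)
  show "\<forall>x\<in>{1..n}. \<beta> \<le> Q' x \<and> Q' x \<le> r * \<beta>" using box j k jk unfolding Q' d_def by auto
  have "(\<Sum>x\<in>{1..n}. (if x = j then d else if x = k then - d else 0))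
      = (\<Sum>x\<in>{1..n}. (if x = j then d else 0) + (if x = k then - d else 0))"
    by (rule sum.cong) (use jk in auto)
  also have "\<dots> = 0" using j k by (simp add: sum.distrib)
  finally have "(\<Sum>x\<in>{1..n}. (if x = j then d else if x = k then - d else 0)) = 0" .
  thus "(\<Sum>x\<in>{1..n}. Q' x) = 1" unfolding Q' sum.distrib sum_Q by simp
  have "Q' j = r * \<beta> \<or> Q' k = \<beta>" using jk unfolding Q' d_def by (auto simp: min_def)
  hence "j \<notin> {x\<in>{1..n}. \<beta> < Q' x \<and> Q' x < r * \<beta>} \<or> k \<notin> {x\<in>{1..n}. \<beta> < Q' x \<and> Q' x < r * \<beta>}"
    by auto
  moreover have "{x\<in>{1..n}. \<beta> < Q' x \<and> Q' x < r * \<beta>} \<subseteq> {x\<in>{1..n}. \<beta> < Q x \<and> Q x < r * \<beta>}"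
  proof
    fix x assume "x \<in> {x\<in>{1..n}. \<beta> < Q' x \<and> Q' x < r * \<beta>}"
    thus "x \<in> {x\<in>{1..n}. \<beta> < Q x \<and> Q x < r * \<beta>}"
      using j k by (cases "x = j \<or> x = k") (auto simp: Q')
  qed
  ultimately show "{x\<in>{1..n}. \<beta> < Q' x \<and> Q' x < r * \<beta>} \<subset> {x\<in>{1..n}. \<beta> < Q x \<and> Q x < r * \<beta>}"
    using j k by blast
qed

text \<open>Induction on the number of masses strictly inside \<open>(\<beta>, \<rho> \<beta>)\<close>: two interior masses allow
  mass transfers in both directions, and \<open>Q\<close> is a convex combination of the two results, each
  with fewer interior masses.\<close>

lemma sum_le_sum_Qbeta:
  fixes \<psi> :: "real \<Rightarrow> real" and Q :: "nat \<Rightarrow> real"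
  assumes \<psi>: "convex_on {0<..} \<psi>" and n: "n \<ge> 2" and r: "r > 1" and \<beta>: "\<beta> \<in> Gamma n r"
    and box: "\<forall>x\<in>{1..n}. \<beta> \<le> Q x \<and> Q x \<le> r * \<beta>" and sum_Q: "(\<Sum>x\<in>{1..n}. Q x) = 1"
  shows "(\<Sum>x\<in>{1..n}. \<psi> (Q x)) \<le> (\<Sum>j\<in>{1..n}. \<psi> (Qbeta n r \<beta> j))"
proof -
  have "(\<Sum>x\<in>{1..n}. \<psi> (Q x)) \<le> (\<Sum>j\<in>{1..n}. \<psi> (Qbeta n r \<beta> j))"
    if "card {x\<in>{1..n}. \<beta> < Q x \<and> Q x < r * \<beta>} \<le> m"
      "\<forall>x\<in>{1..n}. \<beta> \<le> Q x \<and> Q x \<le> r * \<beta>" "(\<Sum>x\<in>{1..n}. Q x) = 1"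
    for m and Q :: "nat \<Rightarrow> real"
    using that
  proof (induction m arbitrary: Q)
    case 0
    hence "card {x\<in>{1..n}. \<beta> < Q x \<and> Q x < r * \<beta>} \<le> 1" by linarith
    thus ?case using sum_eq_sum_Qbeta[OF n r \<beta> 0(2,3)] by simp
  next
    case (Suc m)
    define I where "I = {x\<in>{1..n}. \<beta> < Q x \<and> Q x < r * \<beta>}"
    have fin: "finite I" unfolding I_def by simp
    show ?case
    proof (cases "card I \<le> 1")
      case True
      thus ?thesis using sum_eq_sum_Qbeta[OF n r \<beta> Suc.prems(2,3)] unfolding I_def by simp
    next
      case False
      then obtain j k where j: "j \<in> I" and k: "k \<in> I" and jk: "j \<noteq> k"
        using card_le_Suc0_iff_eq[OF fin] by auto
      define d1 where "d1 = min (r * \<beta> - Q j) (Q k - \<beta>)"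
      define d2 where "d2 = min (r * \<beta> - Q k) (Q j - \<beta>)"
      define Q1 where "Q1 = (\<lambda>x. Q x + (if x = j then d1 else if x = k then - d1 else 0))"
      define Q2 where "Q2 = (\<lambda>x. Q x + (if x = k then d2 else if x = j then - d2 else 0))"
      note T1 = mass_transfer[OF Suc.prems(2,3) j[unfolded I_def] k[unfolded I_def] jk,
          folded d1_def, OF Q1_def, folded I_def]
      note T2 = mass_transfer[OF Suc.prems(2,3) k[unfolded I_def] j[unfolded I_def] jk[symmetric],
          folded d2_def, OF Q2_def, folded I_def]
      define lam where "lam = d2 / (d1 + d2)"
      have lam: "0 \<le> lam" "lam \<le> 1" "lam * d1 = (1 - lam) * d2"
        unfolding lam_def using T1(1) T2(1) by (auto simp: field_simps)
      have Q: "Q x = lam * Q1 x + (1 - lam) * Q2 x" for x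
        unfolding Q1_def Q2_def using lam(3) jk by (auto simp: algebra_simps)
      have "card I \<le> Suc m" using Suc.prems(1) unfolding I_def .
      hence "card {x\<in>{1..n}. \<beta> < Q1 x \<and> Q1 x < r * \<beta>} \<le> m"
        "card {x\<in>{1..n}. \<beta> < Q2 x \<and> Q2 x < r * \<beta>} \<le> m"
        using psubset_card_mono[OF fin T1(4)] psubset_card_mono[OF fin T2(4)] by linarith+
      hence IH: "(\<Sum>x\<in>{1..n}. \<psi> (Q1 x)) \<le> (\<Sum>j\<in>{1..n}. \<psi> (Qbeta n r \<beta> j))"
        "(\<Sum>x\<in>{1..n}. \<psi> (Q2 x)) \<le> (\<Sum>j\<in>{1..n}. \<psi> (Qbeta n r \<beta> j))"
        using Suc.IH T1(2,3) T2(2,3) by blast+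
      have pos: "0 < Q1 x" "0 < Q2 x" if "x \<in> {1..n}" for x
        using T1(2) T2(2) that Qbeta_shape(1)[OF n r \<beta>] by (meson less_le_trans)+
      have "(\<Sum>x\<in>{1..n}. \<psi> (Q x)) \<le> (\<Sum>x\<in>{1..n}. lam * \<psi> (Q1 x) + (1 - lam) * \<psi> (Q2 x))"
        unfolding Q using pos lam convex_onD[OF \<psi>, of "1 - lam"] by (intro sum_mono) auto
      also have "\<dots> = lam * (\<Sum>x\<in>{1..n}. \<psi> (Q1 x)) + (1 - lam) * (\<Sum>x\<in>{1..n}. \<psi> (Q2 x))"
        by (simp add: sum.distrib sum_distrib_left)
      also have "\<dots> \<le> lam * (\<Sum>j\<in>{1..n}. \<psi> (Qbeta n r \<beta> j))
          + (1 - lam) * (\<Sum>j\<in>{1..n}. \<psi> (Qbeta n r \<beta> j))"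
        using lam IH by (intro add_mono mult_left_mono) auto
      finally show ?thesis by (simp add: algebra_simps)
    qed
  qed
  from this[OF order_refl box sum_Q] show ?thesis .
qed

lemma qmin_in_Gamma:
  assumes n: "n \<ge> 1" and r: "r \<ge> 1" and Q: "Q \<in> Pn_rho n r"
  shows "qmin n Q \<in> Gamma n r"
proof -
  note qmin = Pn_rho_qmin_bounds[OF n Q]
  have "1 + (real n - 1) * r > 0" using n r by (simp add: add_pos_nonneg)
  thus ?thesis using qmin(2,4) n unfolding Gamma_def
    by (auto simp: divide_le_eq le_divide_eq mult.commute)
qed

lemma Df_Unif_le_Qbeta_qmin:
  assumes f: "convex_on {0<..} f" and n: "n \<ge> 2" and r: "r > 1" and Q: "Q \<in> Pn_rho n r"
  shows "Df n f Q (Unif n) \<le> Df n f (Qbeta n r (qmin n Q)) (Unif n)"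
proof -
  have n1: "n \<ge> 1" using n by simp
  have \<beta>: "qmin n Q \<in> Gamma n r" using qmin_in_Gamma[OF n1 _ Q] r by simp
  have "(\<Sum>x\<in>{1..n}. f (real n * Q x)) \<le> (\<Sum>j\<in>{1..n}. f (real n * Qbeta n r (qmin n Q) j))"
    using convex_on_scale[OF f, of "real n"] n Pn_rho_qmin_bounds(5)[OF n1 Q] Pn_rhoD(1)[OF Q]
    by (intro sum_le_sum_Qbeta[OF _ n r \<beta>, where \<psi> = "\<lambda>t. f (real n * t)"]) auto
  thus ?thesis unfolding Df_Unif_eq_mean[OF n1] by (simp add: divide_right_mono)
qed

lemma uf_attained_Qbeta:
  assumes f: "convex_on {0<..} f" and n: "n \<ge> 2" and r: "r > 1"
  shows "\<exists>\<beta>\<in>Gamma n r. Df n f (Qbeta n r \<beta>) (Unif n) = uf f n r"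
proof -
  have n1: "n \<ge> 1" and r1: "r \<ge> 1" using n r by auto
  have "continuous_on (Pn_rho n r) (\<lambda>P. Df n f P (Unif n))"
    using convex_on_continuous[OF _ f] by (intro continuous_on_Df_fst) (auto simp: Unif_def)
  then obtain P where P: "P \<in> Pn_rho n r" "\<forall>P'\<in>Pn_rho n r. Df n f P' (Unif n) \<le> Df n f P (Unif n)"
    using Pn_rho_attains_max[OF n1 r1] by blast
  have uf: "uf f n r = Df n f P (Unif n)" unfolding uf_def by (rule cSup_eq_maximum) (use P in auto)
  have \<beta>: "qmin n P \<in> Gamma n r" using qmin_in_Gamma[OF n1 r1 P(1)] .
  have "Df n f P (Unif n) \<le> Df n f (Qbeta n r (qmin n P)) (Unif n)"
    by (rule Df_Unif_le_Qbeta_qmin[OF f n r P(1)])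
  moreover have "Df n f (Qbeta n r (qmin n P)) (Unif n) \<le> Df n f P (Unif n)"
    using P(2) Qbeta_in_Pn_rho[OF n r \<beta>] by blast
  ultimately show ?thesis using \<beta> uf by (intro bexI[of _ "qmin n P"]) auto
qed

subsection \<open>Limits as \<open>n \<rightarrow> \<infinity>\<close>\<close>

lemma nat_floor_grid:
  assumes k: "k \<ge> 1" and x: "x \<in> {0..1::real}"
  shows "nat \<lfloor>real k * x\<rfloor> \<le> k" "real (nat \<lfloor>real k * x\<rfloor>) / real k \<le> x"
    "x - 1 / real k \<le> real (nat \<lfloor>real k * x\<rfloor>) / real k"
proof -
  define m where "m = nat \<lfloor>real k * x\<rfloor>"
  have kx: "0 \<le> real k * x" "real k * x \<le> real k" using x k by (auto simp: mult_left_le)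
  have fl: "real m \<le> real k * x" "real k * x < real m + 1" unfolding m_def using kx by linarith+
  show "nat \<lfloor>real k * x\<rfloor> \<le> k" using fl kx unfolding m_def[symmetric] by linarith
  show "real (nat \<lfloor>real k * x\<rfloor>) / real k \<le> x"
    using fl k unfolding m_def[symmetric] by (simp add: divide_le_eq mult.commute)
  have "x - 1 / real k = (real k * x - 1) / real k" using k by (simp add: field_simps)
  also have "\<dots> \<le> real m / real k" using fl k by (intro divide_right_mono) auto
  finally show "x - 1 / real k \<le> real (nat \<lfloor>real k * x\<rfloor>) / real k" unfolding m_def .
qed

text \<open>The grid points \<open>m/k\<close> just below a maximiser of \<open>g\<^sub>f\<^sup>(\<^sup>\<rho>\<^sup>)\<close> converge to it, and \<open>u\<^sub>f\<close> is
  squeezed between \<open>g\<^sub>f\<^sup>(\<^sup>\<rho>\<^sup>)\<close> at these points and the supremum.\<close>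

lemma uf_tendsto_Sup_gf:
  assumes f: "convex_on {0<..} f" and r: "r \<ge> 1"
  shows "(\<lambda>k. uf f k r) \<longlonglongrightarrow> Sup (gf f r ` {0..1})"
proof -
  have cont: "continuous_on {0<..} f" by (rule convex_on_continuous[OF _ f]) simp
  obtain x where x: "x \<in> {0..1}" "gf f r x = Sup (gf f r ` {0..1})"
    using gf_attains_Sup[OF cont r] by blast
  define y where "y k = real (nat \<lfloor>real k * x\<rfloor>) / real k" for k :: nat
  have y: "\<forall>\<^sub>F k in sequentially. x - 1 / real k \<le> y k \<and> y k \<le> x \<and> y k \<in> {0..1}
      \<and> gf f r (y k) \<le> uf f k r"
    using eventually_ge_at_top[of 1]
  proof eventually_elim
    case (elim k)
    note grid = nat_floor_grid[OF elim x(1)]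
    have "gf f r (y k) \<le> uf f k r" unfolding y_def by (rule gf_grid_le_uf[OF f elim r grid(1)])
    thus ?case using grid x(1) unfolding y_def by auto
  qed
  hence y_lo: "\<forall>\<^sub>F k in sequentially. x - 1 / real k \<le> y k"
    and y_hi: "\<forall>\<^sub>F k in sequentially. y k \<le> x"
    and y_in: "\<forall>\<^sub>F k in sequentially. y k \<in> {0..1}"
    and lower: "\<forall>\<^sub>F k in sequentially. gf f r (y k) \<le> uf f k r"
    by (simp_all add: eventually_conj_iff)
  have "(\<lambda>k. x - 1 / real k) \<longlonglongrightarrow> x" using tendsto_diff[OF tendsto_const lim_inverse_n'] by simp
  hence "y \<longlonglongrightarrow> x" by (rule tendsto_sandwich[OF y_lo y_hi _ tendsto_const])
  hence "(\<lambda>k. gf f r (y k)) \<longlonglongrightarrow> Sup (gf f r ` {0..1})"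
    unfolding x(2)[symmetric] by (rule continuous_on_tendsto_compose[OF continuous_on_gf[OF cont r] _ x(1) y_in])
  moreover have "\<forall>\<^sub>F k in sequentially. uf f k r \<le> Sup (gf f r ` {0..1})"
    using eventually_ge_at_top[of 1] by eventually_elim (rule uf_le_Sup_gf[OF f _ r])
  ultimately show ?thesis using tendsto_sandwich[OF lower _ _ tendsto_const] by blast
qed

lemma gf_fstar:
  assumes r: "r \<ge> 1" and x: "x \<in> {0..1}"
  shows "gf (fstar f) r x = r * x / (1 + (r - 1) * x) * f ((1 + (r - 1) * x) / r)
    + (1 - x) * f (1 + (r - 1) * x) / (1 + (r - 1) * x)"
proof -
  have "1 + (r - 1) * x > 0" using r x by (simp add: add_pos_nonneg)
  thus ?thesis unfolding gf_def fstar_def using r by simp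
qed

lemma vf_tendsto:
  assumes f: "convex_on {0<..} f" and r: "r \<ge> 1"
  shows "(\<lambda>k. vf f k r) \<longlonglongrightarrow> Sup ((\<lambda>x. r * x / (1 + (r - 1) * x) * f ((1 + (r - 1) * x) / r)
                 + (1 - x) * f (1 + (r - 1) * x) / (1 + (r - 1) * x)) ` {0..1})"
proof -
  have "gf (fstar f) r ` {0..1} = (\<lambda>x. r * x / (1 + (r - 1) * x) * f ((1 + (r - 1) * x) / r)
                 + (1 - x) * f (1 + (r - 1) * x) / (1 + (r - 1) * x)) ` {0..1}"
    by (intro image_cong refl gf_fstar[OF r])
  thus ?thesis using uf_tendsto_Sup_gf[OF convex_on_fstar[OF f] r] unfolding vf_eq_uf_fstar by simp
qed

text \<open>Mean value theorem between the maximiser of \<open>g\<^sub>f\<^sup>(\<^sup>\<rho>\<^sup>)\<close> and the grid point below it.\<close>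

lemma lim_uf_minus_uf_le:
  assumes f: "convex_on {0<..} f" and r: "r \<ge> 1" and n: "n \<ge> 1"
    and diff: "\<forall>x\<in>{0<..<1}. gf f r differentiable (at x)"
    and deriv: "\<forall>x\<in>{0<..<1}. deriv (gf f r) x \<le> K" and K: "0 \<le> K"
  shows "0 \<le> lim (\<lambda>k. uf f k r) - uf f n r" "lim (\<lambda>k. uf f k r) - uf f n r \<le> K / real n"
proof -
  have cont: "continuous_on {0<..} f" by (rule convex_on_continuous[OF _ f]) simp
  have lim: "lim (\<lambda>k. uf f k r) = Sup (gf f r ` {0..1})" using uf_tendsto_Sup_gf[OF f r] by (rule limI)
  obtain x where x: "x \<in> {0..1}" "gf f r x = Sup (gf f r ` {0..1})"
    using gf_attains_Sup[OF cont r] by blast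
  define y where "y = real (nat \<lfloor>real n * x\<rfloor>) / real n"
  note grid = nat_floor_grid[OF n x(1), folded y_def]
  have y: "0 \<le> y" "y \<le> x" "x - y \<le> 1 / real n" using grid unfolding y_def by auto
  have "gf f r x - gf f r y \<le> K / real n"
  proof (cases "y = x")
    case False
    hence yx: "y < x" using y by simp
    have "continuous_on {y..x} (gf f r)"
      by (rule continuous_on_subset[OF continuous_on_gf[OF cont r]]) (use x y in auto)
    moreover have "\<And>z. y < z \<Longrightarrow> z < x \<Longrightarrow> gf f r differentiable (at z)" using diff x y by auto
    ultimately obtain l z where z: "y < z" "z < x" "DERIV (gf f r) z :> l"
      and mvt: "gf f r x - gf f r y = (x - y) * l"
      using MVT[OF yx] by blast
    have "l \<le> K" using DERIV_imp_deriv[OF z(3)] deriv z x y by auto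
    hence "(x - y) * l \<le> (x - y) * K" using yx by (intro mult_left_mono) auto
    also have "\<dots> \<le> 1 / real n * K" using y K by (intro mult_right_mono) auto
    finally show ?thesis using mvt by simp
  qed (use K in simp)
  moreover have "gf f r y \<le> uf f n r" unfolding y_def using gf_grid_le_uf[OF f n r grid(1)] .
  moreover have "uf f n r \<le> Sup (gf f r ` {0..1})" by (rule uf_le_Sup_gf[OF f n r])
  ultimately show "0 \<le> lim (\<lambda>k. uf f k r) - uf f n r" "lim (\<lambda>k. uf f k r) - uf f n r \<le> K / real n"
    unfolding lim using x(2) by linarith+
qed

subsection \<open>Limits as \<open>\<rho> \<rightarrow> \<infinity>\<close>\<close>

lemma antimono_tendsto_SUP_at_right_0:
  fixes h :: "real \<Rightarrow> 'a::{complete_linorder, linorder_topology}"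
  assumes b: "0 < b" and anti: "\<And>s t. 0 < s \<Longrightarrow> s \<le> t \<Longrightarrow> t < b \<Longrightarrow> h t \<le> h s"
  shows "(h \<longlongrightarrow> (SUP t\<in>{0<..<b}. h t)) (at_right 0)"
proof (rule order_tendstoI)
  fix a assume "a < (SUP t\<in>{0<..<b}. h t)"
  then obtain t0 where t0: "t0 \<in> {0<..<b}" "a < h t0" by (auto simp: less_SUP_iff)
  have "\<forall>\<^sub>F t in at_right 0. t \<in> {0<..<t0}" using t0 by (intro eventually_at_right_real) auto
  thus "\<forall>\<^sub>F t in at_right 0. a < h t"
  proof eventually_elim
    case (elim t)
    thus ?case using anti[of t t0] t0 by (auto intro: less_le_trans)
  qed
next
  fix a assume a: "(SUP t\<in>{0<..<b}. h t) < a"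
  have "\<forall>\<^sub>F t in at_right 0. t \<in> {0<..<b}" using b by (rule eventually_at_right_real)
  thus "\<forall>\<^sub>F t in at_right 0. h t < a"
  proof eventually_elim
    case (elim t)
    hence "h t \<le> (SUP t\<in>{0<..<b}. h t)" by (intro SUP_upper)
    thus ?case using a by (rule le_less_trans)
  qed
qed

text \<open>The limit \<open>f(0)\<close> exists for convex \<open>f\<close>: the slope \<open>(f t - f 1) / (1 - t)\<close> of the chord to
  \<open>1\<close> decreases on \<open>(0,1)\<close>, so it has a limit in \<open>(-\<infinity>,\<infinity>]\<close> as \<open>t \<rightarrow> 0\<^sup>+\<close>.\<close>

lemma tendsto_f_at_0:
  fixes f :: "real \<Rightarrow> real"
  assumes f: "convex_on {0<..} f"
  shows "((\<lambda>t. ereal (f t)) \<longlongrightarrow> f_at_0 f) (at_right 0)" and "f_at_0 f \<noteq> - \<infinity>"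
proof -
  define \<sigma> where "\<sigma> t = (f t - f 1) / (1 - t)" for t
  define L where "L = (SUP t\<in>{0<..<1}. ereal (\<sigma> t))"
  have anti: "ereal (\<sigma> t) \<le> ereal (\<sigma> s)" if "0 < s" "s \<le> t" "t < 1" for s t
  proof (cases "s = t")
    case False
    hence "(f s - f 1) / (s - 1) \<le> (f t - f 1) / (t - 1)"
      using convex_on_slope_le(2)[OF f, of s 1 t] that by auto
    thus ?thesis using that unfolding \<sigma>_def by (simp add: divide_simps algebra_simps)
  qed simp
  have \<sigma>: "((\<lambda>t. ereal (\<sigma> t)) \<longlongrightarrow> L) (at_right 0)"
    unfolding L_def by (rule antimono_tendsto_SUP_at_right_0[OF zero_less_one anti])
  have L: "L \<noteq> - \<infinity>"
    using SUP_upper[of "1/2" "{0<..<1}" "\<lambda>t. ereal (\<sigma> t)"] unfolding L_def[symmetric] by auto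
  have "((\<lambda>t. ereal (f 1) + ereal (1 - t) * ereal (\<sigma> t)) \<longlongrightarrow> ereal (f 1) + ereal (1 - 0) * L)
      (at_right 0)"
  proof (intro tendsto_add_ereal_general2 tendsto_mult_ereal \<sigma>)
    have "((\<lambda>t. 1 - t) \<longlongrightarrow> (1 - 0 :: real)) (at_right 0)" by (intro tendsto_intros)
    thus "((\<lambda>t. ereal (1 - t)) \<longlongrightarrow> ereal (1 - 0)) (at_right 0)" by (simp add: lim_ereal)
  qed auto
  moreover have "\<forall>\<^sub>F t in at_right 0. ereal (f 1) + ereal (1 - t) * ereal (\<sigma> t) = ereal (f t)"
    using eventually_at_right_real[OF zero_less_one] by eventually_elim (simp add: \<sigma>_def)
  ultimately have lim: "((\<lambda>t. ereal (f t)) \<longlongrightarrow> ereal (f 1) + L) (at_right 0)"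
    using Lim_transform_eventually by fastforce
  hence "f_at_0 f = ereal (f 1) + L" unfolding f_at_0_def by (simp add: tendsto_Lim)
  thus "((\<lambda>t. ereal (f t)) \<longlongrightarrow> f_at_0 f) (at_right 0)" "f_at_0 f \<noteq> - \<infinity>"
    using lim L by auto
qed

lemma convex_le_f_at_0:
  fixes f :: "real \<Rightarrow> real"
  assumes f: "convex_on {0<..} f" and c0: "f_at_0 f = ereal c0"
    and l: "0 < l" "l \<le> 1" and N: "N > 0"
  shows "f (l * N) \<le> l * f N + (1 - l) * c0"
proof -
  have f0: "(f \<longlongrightarrow> c0) (at_right 0)" using tendsto_f_at_0(1)[OF f] unfolding c0 by simp
  have lin: "((\<lambda>s. l * N + (1 - l) * s) \<longlongrightarrow> l * N + (1 - l) * 0) (at_right 0)"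
    by (intro tendsto_intros)
  have "\<forall>\<^sub>F s in at_right 0. l * N + (1 - l) * s \<in> {0<..}"
    using eventually_at_right_real[OF zero_less_one]
    by eventually_elim (use l N in \<open>auto intro!: add_pos_nonneg\<close>)
  hence lhs: "((\<lambda>s. f (l * N + (1 - l) * s)) \<longlongrightarrow> f (l * N + (1 - l) * 0)) (at_right 0)"
    using l N by (intro continuous_on_tendsto_compose[OF convex_on_continuous[OF _ f] lin]) auto
  have rhs: "((\<lambda>s. l * f N + (1 - l) * f s) \<longlongrightarrow> l * f N + (1 - l) * c0) (at_right 0)"
    by (intro tendsto_intros f0)
  have "\<forall>\<^sub>F s in at_right 0. f (l * N + (1 - l) * s) \<le> l * f N + (1 - l) * f s"
    using eventually_at_right_real[OF zero_less_one]
    by eventually_elim (use convex_onD[OF f, of "1 - l" N] l N in auto)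
  hence "f (l * N + (1 - l) * 0) \<le> l * f N + (1 - l) * c0"
    by (rule tendsto_le[OF trivial_limit_at_right_real rhs lhs])
  thus ?thesis by simp
qed

lemma uf_le_f_at_0:
  fixes f :: "real \<Rightarrow> real"
  assumes f: "convex_on {0<..} f" and c0: "f_at_0 f = ereal c0" and n: "n \<ge> 1" and r: "r \<ge> 1"
  shows "uf f n r \<le> (1 - 1 / real n) * c0 + f (real n) / real n"
  unfolding uf_def
proof (rule cSup_least)
  show "(\<lambda>Q. Df n f Q (Unif n)) ` Pn_rho n r \<noteq> {}" using Unif_in_Pn_rho[OF n r] by blast
  fix v assume "v \<in> (\<lambda>Q. Df n f Q (Unif n)) ` Pn_rho n r"
  then obtain Q where Q: "Q \<in> Pn_rho n r" and v: "v = Df n f Q (Unif n)" by blast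
  have "(\<Sum>x\<in>{1..n}. f (real n * Q x)) \<le> (\<Sum>x\<in>{1..n}. Q x * f (real n) + (1 - Q x) * c0)"
  proof (rule sum_mono)
    fix x assume x: "x \<in> {1..n}"
    have "f (Q x * real n) \<le> Q x * f (real n) + (1 - Q x) * c0"
      using Pn_rhoD(2)[OF Q] Pn_rho_le_one[OF Q x] x n by (intro convex_le_f_at_0[OF f c0]) auto
    thus "f (real n * Q x) \<le> Q x * f (real n) + (1 - Q x) * c0" by (simp add: mult.commute)
  qed
  also have "\<dots> = f (real n) + (real n - 1) * c0"
    using Pn_rhoD(1)[OF Q] by (simp add: sum.distrib sum_distrib_right[symmetric] sum_subtractf)
  finally have "Df n f Q (Unif n) \<le> (f (real n) + (real n - 1) * c0) / real n"
    unfolding Df_Unif_eq_mean[OF n] by (simp add: divide_right_mono)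
  also have "\<dots> = (1 - 1 / real n) * c0 + f (real n) / real n" using n by (simp add: field_simps)
  finally show "v \<le> (1 - 1 / real n) * c0 + f (real n) / real n" unfolding v .
qed

lemma gf_one_over_n_tendsto:
  fixes f :: "real \<Rightarrow> real"
  assumes f: "convex_on {0<..} f" and n: "n \<ge> 1"
  shows "((\<lambda>r. ereal (gf f r (1 / real n)))
    \<longlongrightarrow> ereal (1 - 1 / real n) * f_at_0 f + ereal (f (real n) / real n)) at_top"
proof -
  have np: "real n > 0" using n by simp
  define e where "e r = (real n - 1) / r" for r :: real
  have e: "(e \<longlongrightarrow> 0) at_top" unfolding e_def
    by (intro tendsto_divide_0[OF tendsto_const] filterlim_at_top_imp_at_infinity filterlim_ident)
  define A where "A r = r / (1 + (r - 1) * (1 / real n))" for r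
  define B where "B r = 1 / (1 + (r - 1) * (1 / real n))" for r
  have "((\<lambda>r. real n / (1 + e r)) \<longlongrightarrow> real n / (1 + 0)) at_top" by (intro tendsto_intros e) simp
  moreover have "\<forall>\<^sub>F r in at_top. real n / (1 + e r) = A r"
    using eventually_ge_at_top[of "1::real"] by eventually_elim (use np in \<open>auto simp: e_def A_def field_simps\<close>)
  ultimately have "(A \<longlongrightarrow> real n) at_top" by (simp add: tendsto_cong)
  moreover have "\<forall>\<^sub>F r in at_top. A r \<in> {0<..}"
    using eventually_ge_at_top[of "1::real"]
    by eventually_elim (use np in \<open>auto simp: A_def intro!: divide_pos_pos add_pos_nonneg\<close>)
  ultimately have fA: "((\<lambda>r. f (A r)) \<longlongrightarrow> f (real n)) at_top"
    using np by (intro continuous_on_tendsto_compose[OF convex_on_continuous[OF _ f]]) auto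
  have "((\<lambda>r. real n * (1 / r) / (1 + e r)) \<longlongrightarrow> real n * 0 / (1 + 0)) at_top"
    by (intro tendsto_intros e tendsto_divide_0[OF tendsto_const] filterlim_at_top_imp_at_infinity
        filterlim_ident) simp
  moreover have "\<forall>\<^sub>F r in at_top. real n * (1 / r) / (1 + e r) = B r"
    using eventually_ge_at_top[of "1::real"] by eventually_elim (use np in \<open>auto simp: e_def B_def field_simps\<close>)
  ultimately have "(B \<longlongrightarrow> 0) at_top" by (simp add: tendsto_cong)
  moreover have "\<forall>\<^sub>F r in at_top. B r > 0"
    using eventually_ge_at_top[of "1::real"]
    by eventually_elim (use np in \<open>auto simp: B_def intro!: add_pos_nonneg\<close>)
  ultimately have "filterlim B (at_right 0) at_top" by (rule tendsto_imp_filterlim_at_right)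
  hence fB: "((\<lambda>r. ereal (f (B r))) \<longlongrightarrow> f_at_0 f) at_top"
    by (rule filterlim_compose[OF tendsto_f_at_0(1)[OF f]])
  have "((\<lambda>r. ereal (1 / real n * f (A r)) + ereal (1 - 1 / real n) * ereal (f (B r)))
      \<longlongrightarrow> ereal (1 / real n * f (real n)) + ereal (1 - 1 / real n) * f_at_0 f) at_top"
    unfolding lim_ereal using fA fB n
    by (intro tendsto_add_ereal_general2 tendsto_cmult_ereal) (auto simp: lim_ereal intro!: tendsto_intros)
  moreover have "ereal (gf f r (1 / real n))
      = ereal (1 / real n * f (A r)) + ereal (1 - 1 / real n) * ereal (f (B r))" for r
    unfolding gf_def A_def B_def by simp
  ultimately show ?thesis by (simp add: add.commute)
qed

lemma uf_tendsto_at_top: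
  fixes f :: "real \<Rightarrow> real"
  assumes f: "convex_on {0<..} f" and n: "n \<ge> 2"
  shows "((\<lambda>r. ereal (uf f n r))
    \<longlongrightarrow> ereal (1 - 1 / real n) * f_at_0 f + ereal (f (real n) / real n)) at_top"
proof (rule tendsto_sandwich[OF _ _ gf_one_over_n_tendsto[OF f] tendsto_const])
  show "\<forall>\<^sub>F r in at_top. ereal (gf f r (1 / real n)) \<le> ereal (uf f n r)"
    using eventually_ge_at_top[of "1::real"]
    by eventually_elim (use gf_grid_le_uf[OF f _ _ , of n _ 1] n in simp)
  show "\<forall>\<^sub>F r in at_top. ereal (uf f n r) \<le> ereal (1 - 1 / real n) * f_at_0 f + ereal (f (real n) / real n)"
    using eventually_ge_at_top[of "1::real"]
  proof eventually_elim
    case (elim r)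
    show ?case
    proof (cases "f_at_0 f")
      case (real c0)
      thus ?thesis using uf_le_f_at_0[OF f real _ elim] n by simp
    next
      case PInf
      have "1 - 1 / real n > 0" using n by simp
      hence inf: "ereal (1 - 1 / real n) * f_at_0 f = \<infinity>" using PInf n by simp
      show ?thesis unfolding inf by simp
    qed (use tendsto_f_at_0(2)[OF f] in simp)
  qed
qed (use n in simp)

lemma abs_diff_le_of_abs_deriv_le:
  fixes f :: "real \<Rightarrow> real"
  assumes cont: "continuous_on {a..b} f" and diff: "\<forall>t\<in>{a<..<b}. f differentiable (at t)"
    and bound: "\<forall>t\<in>{a<..<b}. \<bar>deriv f t\<bar> \<le> K" and ab: "a \<le> b"
  shows "\<bar>f b - f a\<bar> \<le> K * (b - a)"
proof (cases "a = b")
  case False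
  hence "a < b" using ab by simp
  then obtain l t where t: "a < t" "t < b" "DERIV f t :> l" and mvt: "f b - f a = (b - a) * l"
    using MVT[OF _ cont] diff by force
  have "\<bar>l\<bar> \<le> K" using DERIV_imp_deriv[OF t(3)] bound t by auto
  hence "\<bar>l\<bar> * (b - a) \<le> K * (b - a)" using ab by (intro mult_right_mono) auto
  thus ?thesis unfolding mvt using ab by (simp add: abs_mult mult.commute)
qed simp

lemma f_at_0_le_of_abs_deriv_le:
  fixes f :: "real \<Rightarrow> real"
  assumes f: "convex_on {0<..} f" and c0: "f_at_0 f = ereal c0" and B: "0 < B"
    and diff: "\<forall>t\<in>{0<..<B}. f differentiable (at t)" and bound: "\<forall>t\<in>{0<..<B}. \<bar>deriv f t\<bar> \<le> K"
  shows "c0 - f B \<le> K * B"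
proof -
  have f0: "(f \<longlongrightarrow> c0) (at_right 0)" using tendsto_f_at_0(1)[OF f] unfolding c0 by simp
  have ev: "\<forall>\<^sub>F s in at_right 0. f s - f B \<le> K * (B - s)"
    using eventually_at_right_real[OF B]
  proof eventually_elim
    case (elim s)
    have "continuous_on {s..B} f"
      using elim by (intro continuous_on_subset[OF convex_on_continuous[OF _ f]]) auto
    hence "\<bar>f B - f s\<bar> \<le> K * (B - s)"
      using elim diff bound by (intro abs_diff_le_of_abs_deriv_le) auto
    thus ?case by simp
  qed
  have lhs: "((\<lambda>s. f s - f B) \<longlongrightarrow> c0 - f B) (at_right 0)" by (intro tendsto_intros f0)
  have rhs: "((\<lambda>s. K * (B - s)) \<longlongrightarrow> K * (B - 0)) (at_right 0)" by (intro tendsto_intros)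
  have "c0 - f B \<le> K * (B - 0)" by (rule tendsto_le[OF trivial_limit_at_right_real rhs lhs ev])
  thus ?thesis by simp
qed

text \<open>\<open>u\<^sub>f(n, \<rho>)\<close> is at least \<open>g\<^sub>f\<^sup>(\<^sup>\<rho>\<^sup>)(1/n) = f(A)/n + (1 - 1/n) f(B)\<close> with \<open>A = n\<rho>/(n + \<rho> - 1)\<close>
  and \<open>B = n/(n + \<rho> - 1)\<close>; the limit replaces \<open>A\<close> by \<open>n\<close> and \<open>f(B)\<close> by \<open>f(0)\<close>.\<close>

lemma f_at_0_bound_minus_gf_le:
  fixes f :: "real \<Rightarrow> real"
  assumes f: "convex_on {0<..} f" and c0: "f_at_0 f = ereal c0" and n: "n \<ge> 1" and r: "r \<ge> 1"
    and diff: "\<forall>t\<in>{0<..<real n}. f differentiable (at t)"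
    and bound: "\<forall>t\<in>{0<..<real n}. \<bar>deriv f t\<bar> \<le> K"
  shows "(1 - 1 / real n) * c0 + f (real n) / real n - gf f r (1 / real n)
    \<le> 2 * K * (real n - 1) / (real n + r - 1)"
proof -
  define D where "D = real n + r - 1"
  define A where "A = r / (1 + (r - 1) * (1 / real n))"
  define B where "B = 1 / (1 + (r - 1) * (1 / real n))"
  have gf: "gf f r (1 / real n) = 1 / real n * f A + (1 - 1 / real n) * f B"
    unfolding gf_def A_def B_def by simp
  have D: "D > 0" unfolding D_def using n r by simp
  have A_eq: "A = real n * r / D" unfolding A_def D_def using n r by (simp add: field_simps)
  have B_eq: "B = real n / D" unfolding B_def D_def using n r by (simp add: field_simps)
  have A: "0 < A" "A \<le> real n" unfolding A_eq using D n r by (simp_all add: divide_le_eq D_def)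
  have B: "0 < B" "B \<le> real n" unfolding B_eq using D n r by (simp_all add: divide_le_eq D_def)
  have "continuous_on {A..real n} f"
    using A by (intro continuous_on_subset[OF convex_on_continuous[OF _ f]]) auto
  hence "\<bar>f (real n) - f A\<bar> \<le> K * (real n - A)"
    using A diff bound by (intro abs_diff_le_of_abs_deriv_le) auto
  hence fA: "f (real n) - f A \<le> K * (real n - A)" by simp
  have fB: "c0 - f B \<le> K * B"
    using B diff bound by (intro f_at_0_le_of_abs_deriv_le[OF f c0]) auto
  have eB: "(1 - 1 / real n) * B = (real n - 1) / D" unfolding B_eq using n D by (simp add: field_simps)
  have "1 / real n * (real n - A) = (D - r) / D" unfolding A_eq using n D by (simp add: field_simps)
  hence eA: "1 / real n * (real n - A) = (real n - 1) / D" unfolding D_def by simp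
  have "(1 - 1 / real n) * c0 + f (real n) / real n - gf f r (1 / real n)
      = (1 - 1 / real n) * (c0 - f B) + 1 / real n * (f (real n) - f A)"
    unfolding gf using n by (simp add: field_simps)
  also have "\<dots> \<le> (1 - 1 / real n) * (K * B) + 1 / real n * (K * (real n - A))"
    using fA fB n by (intro add_mono mult_left_mono) auto
  also have "\<dots> = K * ((1 - 1 / real n) * B) + K * (1 / real n * (real n - A))"
    by (simp add: mult_ac)
  also have "\<dots> = 2 * K * (real n - 1) / D" unfolding eA eB by simp
  finally show ?thesis unfolding D_def .
qed

lemma Lim_uf_at_top_minus_uf_le:
  fixes f :: "real \<Rightarrow> real"
  assumes f: "convex_on {0<..} f" and n: "n \<ge> 2" and r: "\<rho> \<ge> 1"
    and fin: "f_at_0 f < \<infinity>" and diff: "\<forall>t\<in>{0<..<real n}. f differentiable (at t)"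
    and bdd: "bdd_above ((\<lambda>t. \<bar>deriv f t\<bar>) ` {0<..<real n})"
  shows "0 \<le> Lim at_top (\<lambda>r. uf f n r) - uf f n \<rho>"
    "Lim at_top (\<lambda>r. uf f n r) - uf f n \<rho>
          \<le> 2 * Sup ((\<lambda>t. \<bar>deriv f t\<bar>) ` {0<..<real n}) * (real n - 1) / (real n + \<rho> - 1)"
proof -
  have n1: "n \<ge> 1" using n by simp
  obtain c0 where c0: "f_at_0 f = ereal c0" using fin tendsto_f_at_0(2)[OF f] by (cases "f_at_0 f") auto
  have "((\<lambda>r. uf f n r) \<longlongrightarrow> (1 - 1 / real n) * c0 + f (real n) / real n) at_top"
    using uf_tendsto_at_top[OF f n] unfolding c0 by simp
  hence Lim: "Lim at_top (\<lambda>r. uf f n r) = (1 - 1 / real n) * c0 + f (real n) / real n"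
    by (simp add: tendsto_Lim)
  have bound: "\<forall>t\<in>{0<..<real n}. \<bar>deriv f t\<bar> \<le> Sup ((\<lambda>t. \<bar>deriv f t\<bar>) ` {0<..<real n})"
    using bdd by (auto intro: cSup_upper)
  have "gf f \<rho> (1 / real n) \<le> uf f n \<rho>" using gf_grid_le_uf[OF f n1 r, of 1] n by simp
  thus "0 \<le> Lim at_top (\<lambda>r. uf f n r) - uf f n \<rho>"
    "Lim at_top (\<lambda>r. uf f n r) - uf f n \<rho>
      \<le> 2 * Sup ((\<lambda>t. \<bar>deriv f t\<bar>) ` {0<..<real n}) * (real n - 1) / (real n + \<rho> - 1)"
    using uf_le_f_at_0[OF f c0 n1 r] f_at_0_bound_minus_gf_le[OF f c0 n1 r diff bound]
    unfolding Lim by linarith+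
qed

subsection \<open>Quadratic bounds\<close>

lemma taylor_2_at_1:
  fixes f :: "real \<Rightarrow> real"
  assumes f: "twice_diff_pos f" and ab: "0 < a" "a \<le> 1" "1 \<le> b" and y: "a \<le> y" "y \<le> b"
  shows "\<exists>t. a \<le> t \<and> t \<le> b \<and> f y = f 1 + deriv f 1 * (y - 1) + deriv (deriv f) t / 2 * (y - 1)\<^sup>2"
proof (cases "y = 1")
  case False
  define D where "D m = (if m = 0 then f else if m = 1 then deriv f else deriv (deriv f))" for m :: nat
  have "DERIV (D m) t :> D (Suc m) t" if "m < 2" "a \<le> t" "t \<le> b" for m t
  proof -
    have "f differentiable (at t)" "deriv f differentiable (at t)"
      using f that ab unfolding twice_diff_pos_def by auto
    thus ?thesis using that(1) by (auto simp: D_def DERIV_deriv_iff_real_differentiable less_2_cases_iff)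
  qed
  then obtain t where t: "if y < 1 then y < t \<and> t < 1 else 1 < t \<and> t < y"
    "f y = (\<Sum>m<2. D m 1 / fact m * (y - 1) ^ m) + D 2 t / fact 2 * (y - 1) ^ 2"
    using Taylor[of 2 D f a b 1 y] ab y False by (auto simp: D_def)
  hence "a \<le> t \<and> t \<le> b" using ab y by (auto split: if_splits)
  moreover have "f y = f 1 + deriv f 1 * (y - 1) + deriv (deriv f) t / 2 * (y - 1)\<^sup>2"
    using t(2) by (simp add: D_def numeral_2_eq_2)
  ultimately show ?thesis by blast
qed (use ab in auto)

lemma sum_scaled_deviation:
  assumes n: "n \<ge> 1" and Q: "(\<Sum>x\<in>{1..n}. Q x) = 1"
  shows "(\<Sum>x\<in>{1..n}. real n * Q x - 1) = 0"
    and "(\<Sum>x\<in>{1..n}. (real n * Q x - 1)\<^sup>2) / real n = real n * sqnorm2 n Q - 1"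
proof -
  show "(\<Sum>x\<in>{1..n}. real n * Q x - 1) = 0"
    using Q by (simp add: sum_subtractf sum_distrib_left[symmetric])
  have "(\<Sum>x\<in>{1..n}. (real n * Q x - 1)\<^sup>2) = (\<Sum>x\<in>{1..n}. (real n)\<^sup>2 * (Q x)\<^sup>2 - 2 * real n * Q x + 1)"
    by (rule sum.cong) (auto simp: power2_eq_square algebra_simps)
  also have "\<dots> = (real n)\<^sup>2 * sqnorm2 n Q - real n"
    unfolding sqnorm2_def using Q by (simp add: sum.distrib sum_subtractf sum_distrib_left[symmetric])
  finally show "(\<Sum>x\<in>{1..n}. (real n * Q x - 1)\<^sup>2) / real n = real n * sqnorm2 n Q - 1"
    using n by (simp add: field_simps power2_eq_square)
qed

lemma Pn_rho_scaled_range: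
  assumes n: "n \<ge> 1" and r: "r \<ge> 1" and Q: "Q \<in> Pn_rho n r" and x: "x \<in> {1..n}"
  shows "1 / r \<le> real n * Q x" "real n * Q x \<le> r"
proof -
  note qmin = Pn_rho_qmin_bounds[OF n Q]
  have "1 / r \<le> real n * qmin n Q" using qmin(3) r by (simp add: divide_le_eq mult_ac)
  also have "\<dots> \<le> real n * Q x" using qmin(5) x by (simp add: mult_left_mono)
  finally show "1 / r \<le> real n * Q x" .
  have "real n * Q x \<le> real n * (r * qmin n Q)" using qmin(5) x by (simp add: mult_left_mono)
  also have "\<dots> \<le> r" using qmin(2) r by (simp add: mult.left_commute mult_left_le)
  finally show "real n * Q x \<le> r" .
qed

text \<open>With \<open>y = n Q(x) \<in> [a, \<rho> a]\<close>, \<open>(y - a)(\<rho> a - y) \<ge> 0\<close> gives \<open>\<Sum> y\<^sup>2 \<le> n((1 + \<rho>) a - \<rho> a\<^sup>2)\<close>,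
  which is maximal at \<open>a = (1 + \<rho>) / (2 \<rho>)\<close>.\<close>

lemma sqnorm2_bounds:
  assumes n: "n \<ge> 1" and r: "r \<ge> 1" and Q: "Q \<in> Pn_rho n r"
  shows "0 \<le> real n * sqnorm2 n Q - 1" "real n * sqnorm2 n Q - 1 \<le> (r - 1)\<^sup>2 / (4 * r)"
proof -
  note dev = sum_scaled_deviation[OF n Pn_rhoD(1)[OF Q]]
  show "0 \<le> real n * sqnorm2 n Q - 1" unfolding dev(2)[symmetric] by (simp add: sum_nonneg)
  define a where "a = real n * qmin n Q"
  note qmin = Pn_rho_qmin_bounds[OF n Q]
  have sq: "(real n * Q x)\<^sup>2 \<le> (1 + r) * a * (real n * Q x) - r * a\<^sup>2" if "x \<in> {1..n}" for x
  proof -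
    have "a \<le> real n * Q x" "real n * Q x \<le> r * a"
      using qmin(5) that n unfolding a_def by (auto simp: mult_left_mono mult.left_commute)
    hence "0 \<le> (real n * Q x - a) * (r * a - real n * Q x)" by simp
    thus ?thesis by (simp add: algebra_simps power2_eq_square)
  qed
  have "(\<Sum>x\<in>{1..n}. (real n * Q x - 1)\<^sup>2) = (\<Sum>x\<in>{1..n}. (real n * Q x)\<^sup>2 - 2 * (real n * Q x - 1) - 1)"
    by (rule sum.cong) (auto simp: power2_eq_square algebra_simps)
  also have "\<dots> = (\<Sum>x\<in>{1..n}. (real n * Q x)\<^sup>2) - 2 * (\<Sum>x\<in>{1..n}. real n * Q x - 1) - real n"
    by (simp only: sum_subtractf sum_distrib_left[symmetric] sum_constant) simp
  also have "\<dots> = (\<Sum>x\<in>{1..n}. (real n * Q x)\<^sup>2) - real n"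
    using dev(1) by simp
  also have "\<dots> \<le> (\<Sum>x\<in>{1..n}. (1 + r) * a * (real n * Q x) - r * a\<^sup>2) - real n"
    using sq by (intro diff_right_mono sum_mono) auto
  also have "\<dots> = (1 + r) * a * (real n * (\<Sum>x\<in>{1..n}. Q x)) - real n * (r * a\<^sup>2) - real n"
    by (simp only: sum_subtractf sum_distrib_left[symmetric] sum_constant) simp
  also have "\<dots> = real n * ((1 + r) * a - r * a\<^sup>2 - 1)"
    using Pn_rhoD(1)[OF Q] by (simp add: algebra_simps)
  finally have "real n * sqnorm2 n Q - 1 \<le> (1 + r) * a - r * a\<^sup>2 - 1"
    unfolding dev(2)[symmetric] using n by (simp add: divide_le_eq mult.commute)
  also have "\<dots> \<le> (r - 1)\<^sup>2 / (4 * r)"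
  proof -
    have "0 \<le> (2 * r * a - (1 + r))\<^sup>2" by simp
    hence "4 * r * ((1 + r) * a - r * a\<^sup>2 - 1) \<le> (r - 1)\<^sup>2" by (simp add: algebra_simps power2_eq_square)
    thus ?thesis using r by (simp add: le_divide_eq mult.commute)
  qed
  finally show "real n * sqnorm2 n Q - 1 \<le> (r - 1)\<^sup>2 / (4 * r)" .
qed

text \<open>The linear Taylor term may be subtracted because the scaled masses average to \<open>1\<close>.\<close>

lemma Df_Unif_eq_taylor_remainder:
  assumes n: "n \<ge> 1" and Q: "(\<Sum>x\<in>{1..n}. Q x) = 1"
  shows "Df n f Q (Unif n) = (\<Sum>x\<in>{1..n}. f (real n * Q x) - deriv f 1 * (real n * Q x - 1)) / real n"
  unfolding Df_Unif_eq_mean[OF n] using sum_scaled_deviation(1)[OF n Q]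
  by (simp add: sum_subtractf sum_distrib_left[symmetric])

lemma Df_Unif_ge_quadratic:
  fixes f :: "real \<Rightarrow> real"
  assumes n: "n \<ge> 1" and r: "r \<ge> 1" and Q: "Q \<in> Pn_rho n r" and f1: "f 1 = 0"
    and f: "twice_diff_pos f" and lo: "\<forall>t\<in>{1/r..r}. m \<le> deriv (deriv f) t"
  shows "m / 2 * (real n * sqnorm2 n Q - 1) \<le> Df n f Q (Unif n)"
proof -
  note dev = sum_scaled_deviation[OF n Pn_rhoD(1)[OF Q]]
  have "m / 2 * (real n * Q x - 1)\<^sup>2 \<le> f (real n * Q x) - deriv f 1 * (real n * Q x - 1)"
    if x: "x \<in> {1..n}" for x
  proof -
    obtain t where t: "1/r \<le> t" "t \<le> r"
      "f (real n * Q x) = deriv f 1 * (real n * Q x - 1) + deriv (deriv f) t / 2 * (real n * Q x - 1)\<^sup>2"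
      using taylor_2_at_1[OF f _ _ r, of "1 / r" "real n * Q x"] Pn_rho_scaled_range[OF n r Q x] r f1
      by auto
    thus ?thesis using lo by (simp add: mult_right_mono divide_right_mono)
  qed
  hence "(\<Sum>x\<in>{1..n}. m / 2 * (real n * Q x - 1)\<^sup>2) / real n \<le> Df n f Q (Unif n)"
    unfolding Df_Unif_eq_taylor_remainder[OF n Pn_rhoD(1)[OF Q]]
    by (intro divide_right_mono sum_mono) auto
  thus ?thesis unfolding dev(2)[symmetric] by (simp add: sum_distrib_left)
qed

lemma Df_Unif_le_quadratic:
  fixes f :: "real \<Rightarrow> real"
  assumes n: "n \<ge> 1" and r: "r \<ge> 1" and Q: "Q \<in> Pn_rho n r" and f1: "f 1 = 0"
    and f: "twice_diff_pos f" and hi: "\<forall>t\<in>{1/r..r}. deriv (deriv f) t \<le> M"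
  shows "Df n f Q (Unif n) \<le> M / 2 * (real n * sqnorm2 n Q - 1)"
proof -
  note dev = sum_scaled_deviation[OF n Pn_rhoD(1)[OF Q]]
  have "f (real n * Q x) - deriv f 1 * (real n * Q x - 1) \<le> M / 2 * (real n * Q x - 1)\<^sup>2"
    if x: "x \<in> {1..n}" for x
  proof -
    obtain t where t: "1/r \<le> t" "t \<le> r"
      "f (real n * Q x) = deriv f 1 * (real n * Q x - 1) + deriv (deriv f) t / 2 * (real n * Q x - 1)\<^sup>2"
      using taylor_2_at_1[OF f _ _ r, of "1 / r" "real n * Q x"] Pn_rho_scaled_range[OF n r Q x] r f1
      by auto
    thus ?thesis using hi by (simp add: mult_right_mono divide_right_mono)
  qed
  hence "Df n f Q (Unif n) \<le> (\<Sum>x\<in>{1..n}. M / 2 * (real n * Q x - 1)\<^sup>2) / real n"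
    unfolding Df_Unif_eq_taylor_remainder[OF n Pn_rhoD(1)[OF Q]]
    by (intro divide_right_mono sum_mono) auto
  thus ?thesis unfolding dev(2)[symmetric] by (simp add: sum_distrib_left)
qed

lemma Df_chi2_Unif:
  assumes n: "n \<ge> 1" and Q: "(\<Sum>x\<in>{1..n}. Q x) = 1"
  shows "Df n (\<lambda>t. (t - 1)\<^sup>2) Q (Unif n) = 2 / 2 * (real n * sqnorm2 n Q - 1)"
  using sum_scaled_deviation(2)[OF n Q] unfolding Df_Unif_eq_mean[OF n] by simp

lemma quadratic_bound_le_of_rho_le:
  assumes d: "0 < d" and M: "0 < M" and r: "r \<ge> 1"
    and rc: "r \<le> 1 + 4 * d / M + sqrt (8 * d / M + 16 * d\<^sup>2 / M\<^sup>2)"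
  shows "M * (r - 1)\<^sup>2 / (8 * r) \<le> d"
proof -
  define c where "c = 4 * d / M"
  have c: "c > 0" unfolding c_def using d M by simp
  have e: "8 * d / M + 16 * d\<^sup>2 / M\<^sup>2 = c\<^sup>2 + 2 * c"
    unfolding c_def by (simp add: power2_eq_square field_simps)
  have w: "r - 1 \<le> c + sqrt (c\<^sup>2 + 2 * c)" using rc unfolding c_def[symmetric] e by simp
  have "(r - 1 - c)\<^sup>2 \<le> c\<^sup>2 + 2 * c"
  proof (cases "r - 1 \<ge> c")
    case True
    hence "(r - 1 - c)\<^sup>2 \<le> (sqrt (c\<^sup>2 + 2 * c))\<^sup>2" using w by (intro power_mono) auto
    thus ?thesis using c by simp
  next
    case False
    hence "(c - (r - 1))\<^sup>2 \<le> c\<^sup>2" using r by (intro power_mono) auto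
    thus ?thesis using c by (simp add: power2_commute)
  qed
  hence "(r - 1)\<^sup>2 \<le> 2 * c * r" by (simp add: power2_eq_square algebra_simps)
  hence "M * (r - 1)\<^sup>2 \<le> 8 * d * r" unfolding c_def using M by (simp add: field_simps)
  thus ?thesis using r by (simp add: divide_le_eq mult_ac)
qed

lemma Df_Unif_quadratic_bounds:
  fixes f :: "real \<Rightarrow> real"
  assumes n: "n \<ge> 1" and r: "r \<ge> 1" and Q: "Q \<in> Pn_rho n r" and f1: "f 1 = 0"
    and f: "twice_diff_pos f" and m: "0 \<le> m"
    and f2: "\<forall>t\<in>{1/r..r}. m \<le> deriv (deriv f) t \<and> deriv (deriv f) t \<le> M"
  shows "0 \<le> m / 2 * (real n * sqnorm2 n Q - 1)"
    "m / 2 * (real n * sqnorm2 n Q - 1) \<le> Df n f Q (Unif n)"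
    "Df n f Q (Unif n) \<le> M / 2 * (real n * sqnorm2 n Q - 1)"
    "M / 2 * (real n * sqnorm2 n Q - 1) \<le> M * (r - 1)\<^sup>2 / (8 * r)"
proof -
  note sq = sqnorm2_bounds[OF n r Q]
  show "0 \<le> m / 2 * (real n * sqnorm2 n Q - 1)" using sq(1) m by simp
  show "m / 2 * (real n * sqnorm2 n Q - 1) \<le> Df n f Q (Unif n)"
    using f2 by (intro Df_Unif_ge_quadratic[OF n r Q f1 f]) auto
  show "Df n f Q (Unif n) \<le> M / 2 * (real n * sqnorm2 n Q - 1)"
    using f2 by (intro Df_Unif_le_quadratic[OF n r Q f1 f]) auto
  have "1 \<in> {1/r..r}" using r by simp
  hence "m \<le> M" using f2 by (meson order_trans)
  hence "0 \<le> M" using m by simp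
  hence "M / 2 * (real n * sqnorm2 n Q - 1) \<le> M / 2 * ((r - 1)\<^sup>2 / (4 * r))"
    using sq(2) by (intro mult_left_mono) auto
  thus "M / 2 * (real n * sqnorm2 n Q - 1) \<le> M * (r - 1)\<^sup>2 / (8 * r)" by simp
qed

lemma Df_Unif_le_of_rho_le:
  fixes f :: "real \<Rightarrow> real"
  assumes n: "n \<ge> 1" and r: "r \<ge> 1" and Q: "Q \<in> Pn_rho n r" and f1: "f 1 = 0"
    and d: "0 < d" and M: "0 < M" and f: "twice_diff_pos f" and f2: "\<forall>t>0. deriv (deriv f) t \<le> M"
    and rc: "r \<le> 1 + 4 * d / M + sqrt (8 * d / M + 16 * d\<^sup>2 / M\<^sup>2)"
  shows "Df n f Q (Unif n) \<le> d"
proof -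
  have "\<forall>t\<in>{1/r..r}. deriv (deriv f) t \<le> M"
  proof
    fix t assume "t \<in> {1/r..r}"
    moreover have "0 < 1 / r" using r by simp
    ultimately have "0 < t" by (meson atLeastAtMost_iff less_le_trans)
    thus "deriv (deriv f) t \<le> M" using f2 by blast
  qed
  hence "Df n f Q (Unif n) \<le> M / 2 * (real n * sqnorm2 n Q - 1)"
    by (rule Df_Unif_le_quadratic[OF n r Q f1 f])
  also have "\<dots> \<le> M / 2 * ((r - 1)\<^sup>2 / (4 * r))"
    using sqnorm2_bounds(2)[OF n r Q] M by (intro mult_left_mono) auto
  also have "\<dots> \<le> d" using quadratic_bound_le_of_rho_le[OF d M r rc] by simp
  finally show ?thesis .
qed

theorem theorem7:
  fixes f :: "real \<Rightarrow> real" and n :: nat and \<rho> :: real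
  assumes fconv: "convex_on {0<..} f" and f1: "f 1 = 0"
    and n2: "n \<ge> 2" and rho1: "\<rho> \<ge> 1"
  shows
  \<comment> \<open>(a)\<close>
  "(Pn_rho n \<rho> \<noteq> {} \<and> convex_fset (Pn_rho n \<rho>) \<and> compact (Pn_rho n \<rho>))
  \<comment> \<open>(b)\<close>
   \<and> (\<forall>Q\<in>Pn n. (\<forall>x\<in>{1..n}. 0 < Q x) \<longrightarrow>
        (\<exists>P\<in>Pn_rho n \<rho>. \<forall>P'\<in>Pn_rho n \<rho>. Df n f P' Q \<le> Df n f P Q)
      \<and> (\<exists>P\<in>Pn_rho n \<rho>. \<forall>P'\<in>Pn_rho n \<rho>. Df n f Q P' \<le> Df n f Q P))
  \<comment> \<open>(c)\<close>
   \<and> (\<rho> > 1 \<longrightarrow>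
        (\<forall>\<beta>\<in>Gamma n \<rho>. Qbeta n \<rho> \<beta> \<in> Pn_rho n \<rho>)
      \<and> (\<exists>\<beta>\<in>Gamma n \<rho>. Df n f (Qbeta n \<rho> \<beta>) (Unif n) = uf f n \<rho>)
      \<and> (\<forall>\<beta>\<in>Gamma n \<rho>. Df n f (Qbeta n \<rho> \<beta>) (Unif n) \<le> uf f n \<rho>)
      \<and> (\<exists>\<beta>\<in>Gamma n \<rho>. Df n f (Unif n) (Qbeta n \<rho> \<beta>) = vf f n \<rho>)
      \<and> (\<forall>\<beta>\<in>Gamma n \<rho>. Df n f (Unif n) (Qbeta n \<rho> \<beta>) \<le> vf f n \<rho>))
  \<comment> \<open>(d)\<close>
   \<and> (Max ((\<lambda>m. gf f \<rho> (real m / real n)) ` {0..n}) \<le> uf f n \<rho>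
      \<and> uf f n \<rho> \<le> Sup (gf f \<rho> ` {0..1})
      \<and> Max ((\<lambda>m. gf (fstar f) \<rho> (real m / real n)) ` {0..n}) \<le> vf f n \<rho>
      \<and> vf f n \<rho> \<le> Sup (gf (fstar f) \<rho> ` {0..1}))
  \<comment> \<open>(e)\<close>
   \<and> ((\<lambda>k. uf f k \<rho>) \<longlonglongrightarrow> Sup (gf f \<rho> ` {0..1}))
   \<and> ((\<lambda>k. vf f k \<rho>) \<longlonglongrightarrow>
        Sup ((\<lambda>x. \<rho> * x / (1 + (\<rho> - 1) * x) * f ((1 + (\<rho> - 1) * x) / \<rho>)
                 + (1 - x) * f (1 + (\<rho> - 1) * x) / (1 + (\<rho> - 1) * x)) ` {0..1}))
  \<comment> \<open>(f)\<close>
   \<and> (\<forall>K::real. (\<forall>x\<in>{0<..<1}. gf f \<rho> differentiable (at x))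
         \<and> (\<forall>x\<in>{0<..<1}. deriv (gf f \<rho>) x \<le> K) \<and> 0 \<le> K \<longrightarrow>
        0 \<le> lim (\<lambda>k. uf f k \<rho>) - uf f n \<rho>
      \<and> lim (\<lambda>k. uf f k \<rho>) - uf f n \<rho> \<le> K / real n)
  \<comment> \<open>(g)\<close>
   \<and> (((\<lambda>r. ereal (uf f n r)) \<longlongrightarrow>
         ereal (1 - 1 / real n) * f_at_0 f + ereal (f (real n) / real n)) at_top)
   \<and> (f_at_0 f < \<infinity> \<and> (\<forall>t\<in>{0<..<real n}. f differentiable (at t))
        \<and> bdd_above ((\<lambda>t. \<bar>deriv f t\<bar>) ` {0<..<real n}) \<longrightarrow>
        0 \<le> Lim at_top (\<lambda>r. uf f n r) - uf f n \<rho>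
      \<and> Lim at_top (\<lambda>r. uf f n r) - uf f n \<rho>
          \<le> 2 * Sup ((\<lambda>t. \<bar>deriv f t\<bar>) ` {0<..<real n}) * (real n - 1) / (real n + \<rho> - 1))
  \<comment> \<open>(h)\<close>
   \<and> (\<forall>m M :: real. twice_diff_pos f \<and> 0 \<le> m
         \<and> (\<forall>t\<in>{1/\<rho>..\<rho>}. m \<le> deriv (deriv f) t \<and> deriv (deriv f) t \<le> M) \<longrightarrow>
        (\<forall>Q\<in>Pn_rho n \<rho>.
           0 \<le> m / 2 * (real n * sqnorm2 n Q - 1)
         \<and> m / 2 * (real n * sqnorm2 n Q - 1) \<le> Df n f Q (Unif n)
         \<and> Df n f Q (Unif n) \<le> M / 2 * (real n * sqnorm2 n Q - 1)
         \<and> M / 2 * (real n * sqnorm2 n Q - 1) \<le> M * (\<rho> - 1)\<^sup>2 / (8 * \<rho>)))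
   \<and> (\<forall>Q\<in>Pn_rho n \<rho>. Df n (\<lambda>t. (t - 1)\<^sup>2) Q (Unif n) = 2 / 2 * (real n * sqnorm2 n Q - 1))
  \<comment> \<open>(i)\<close>
   \<and> (\<forall>d Mf :: real. 0 < d \<and> 0 < Mf \<and> twice_diff_pos f \<and> (\<forall>t>0. deriv (deriv f) t \<le> Mf)
        \<and> \<rho> \<le> 1 + 4 * d / Mf + sqrt (8 * d / Mf + 16 * d\<^sup>2 / Mf\<^sup>2) \<longrightarrow>
        (\<forall>Q\<in>Pn_rho n \<rho>. Df n f Q (Unif n) \<le> d))"
proof -
  have n1: "n \<ge> 1" using n2 by simp
  have fstar: "convex_on {0<..} (fstar f)" by (rule convex_on_fstar[OF fconv])
  have cont: "continuous_on {0<..} f" by (rule convex_on_continuous[OF _ fconv]) simp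
  show ?thesis
    unfolding vf_eq_uf_fstar Df_Unif_left_eq_fstar
  proof (intro conjI allI impI ballI)
  qed (blast intro: Unif_in_Pn_rho[OF n1 rho1] convex_fset_Pn_rho[OF n1] compact_Pn_rho[OF n1 rho1]
      Pn_rho_attains_max[OF n1 rho1 continuous_on_Df_fst[OF cont]]
      Pn_rho_attains_max[OF n1 rho1 continuous_on_Df_snd[OF cont]]
      Qbeta_in_Pn_rho[OF n2] uf_attained_Qbeta[OF fconv n2] uf_attained_Qbeta[OF fstar n2]
      Df_Unif_le_uf[OF fconv n1 rho1] Df_Unif_le_uf[OF fstar n1 rho1]
      Max_gf_grid_le_uf[OF fconv n1 rho1] Max_gf_grid_le_uf[OF fstar n1 rho1]
      uf_le_Sup_gf[OF fconv n1 rho1] uf_le_Sup_gf[OF fstar n1 rho1]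
      uf_tendsto_Sup_gf[OF fconv rho1] vf_tendsto[OF fconv rho1, unfolded vf_eq_uf_fstar]
      lim_uf_minus_uf_le[OF fconv rho1 n1] uf_tendsto_at_top[OF fconv n2]
      Lim_uf_at_top_minus_uf_le[OF fconv n2 rho1]
      Df_Unif_quadratic_bounds[where f = f, OF n1 rho1 _ f1] Df_chi2_Unif[OF n1 Pn_rhoD(1)]
      Df_Unif_le_of_rho_le[where f = f, OF n1 rho1 _ f1])+
qed

end
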